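(* Let $G$ be a cubical $\omega$-category with connections. For each $n\ge0$, the set $\Phi_n(G_n)$ is an $\omega$-category with the following structure: for $0\le p<n$, $d^\alpha_px=\varepsilon_1^{n-p}(\partial^\alpha_1)^{n-p}x$ and $x\#_py=x\circ_{n-p}y$ where defined; for $p\ge n$, $d^\alpha_px=x$ and the only composites are $x\#_px=x$. Moreover $\varepsilon_1$ maps $\Phi_n(G_n)$ into $\Phi_{n+1}(G_{n+1})$, giving a sequence of $\omega$-categories and homomorphisms $\Phi_0(G_0)\xrightarrow{\varepsilon_1}\Phi_1(G_1)\xrightarrow{\varepsilon_1}\Phi_2(G_2)\to\cdots$.
   Context: An $\omega$-category is a set $X$ with unary operations $d^-_p,d^+_p$ and partial binary operations $\#_p$ ($p\ge0$) such that: $x\#_py$ is defined iff $d^+_px=d^-_py$; $d^\beta_qd^\alpha_px=d^\beta_qx$ for $q<p$ and $=d^\alpha_px$ for $q\ge p$; if $x\#_py$ is defined then $d^-_p(x\#_py)=d^-_px$, $d^+_p(x\#_py)=d^+_py$, $d^\beta_q(x\#_py)=d^\beta_qx\#_pd^\beta_qy$ ($q\ne p$); $d^-_px\#_px=x\#_pd^+_px=x$; $\#_p$ is associative; for $p\ne q$, $(x\#_py)\#_q(x'\#_py')=(x\#_qx')\#_p(y\#_qy')$ whenever both sides are defined; each $x$ has a dimension $\dim x$ with $d^\alpha_px=x$ iff $p\ge\dim x$. Homomorphisms preserve all operations. A cubical $\omega$-category with connections $G$ consists of sets $G_n$ ($n\ge0$), face maps $\partial^\alpha_i:G_n\to G_{n-1}$,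 degeneracies $\varepsilon_i:G_{n-1}\to G_n$, connections $\Gamma^\alpha_i:G_n\to G_{n+1}$ ($1\le i\le n$, $\alpha=\pm$) and partial compositions $\circ_j$ on $G_n$ ($1\le j\le n$, $a\circ_jb$ defined iff $\partial^+_ja=\partial^-_jb$) satisfying: $\partial^\alpha_i\partial^\beta_j=\partial^\beta_{j-1}\partial^\alpha_i$ ($i<j$), $\varepsilon_i\varepsilon_j=\varepsilon_{j+1}\varepsilon_i$ ($i\le j$), $\partial^\alpha_i\varepsilon_j=\varepsilon_{j-1}\partial^\alpha_i$ ($i<j$), $\varepsilon_j\partial^\alpha_{i-1}$ ($i>j$), $\mathrm{id}$ ($i=j$); $\Gamma^\alpha_i\Gamma^\beta_j=\Gamma^\beta_{j+1}\Gamma^\alpha_i$ ($i<j$), $\Gamma^\alpha_i\Gamma^\alpha_i=\Gamma^\alpha_{i+1}\Gamma^\alpha_i$, $\Gamma^\alpha_i\varepsilon_j=\varepsilon_{j+1}\Gamma^\alpha_i$ ($i<j$), $\varepsilon_j\Gamma^\alpha_{i-1}$ ($i>j$), $\Gamma^\alpha_j\varepsilon_j=\varepsilon_{j+1}\varepsilon_j$, $\partial^\alpha_i\Gamma^\beta_j=\Gamma^\beta_{j-1}\partial^\alpha_i$ ($i<j$), $\Gamma^\beta_j\partial^\alpha_{i-1}$ ($i>j+1$), $\partial^\alpha_j\Gamma^\alpha_j=\partial^\alpha_{j+1}\Gamma^\alpha_j=\mathrm{id}$, $\partial^\alpha_j\Gamma^{-\alpha}_j=\partial^\alpha_{j+1}\Gamma^{-\alpha}_j=\varepsilon_j\partial^\alpha_j$;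 $\partial^-_j(a\circ_jb)=\partial^-_ja$, $\partial^+_j(a\circ_jb)=\partial^+_jb$, $\partial^\alpha_i(a\circ_jb)=\partial^\alpha_ia\circ_{j-1}\partial^\alpha_ib$ ($i<j$), $\partial^\alpha_ia\circ_j\partial^\alpha_ib$ ($i>j$); interchange $(a\circ_ib)\circ_j(c\circ_id)=(a\circ_jc)\circ_i(b\circ_jd)$ for $i\ne j$; $\varepsilon_i(a\circ_jb)=\varepsilon_ia\circ_{j+1}\varepsilon_ib$ ($i\le j$), $\varepsilon_ia\circ_j\varepsilon_ib$ ($i>j$); $\Gamma^\alpha_i(a\circ_jb)=\Gamma^\alpha_ia\circ_{j+1}\Gamma^\alpha_ib$ ($i<j$), $\Gamma^\alpha_ia\circ_j\Gamma^\alpha_ib$ ($i>j$); $\Gamma^+_j(a\circ_jb)=(\Gamma^+_ja\circ_j\varepsilon_ja)\circ_{j+1}(\varepsilon_{j+1}a\circ_j\Gamma^+_jb)$, $\Gamma^-_j(a\circ_jb)=(\Gamma^-_ja\circ_j\varepsilon_{j+1}b)\circ_{j+1}(\varepsilon_jb\circ_j\Gamma^-_jb)$; each $\circ_j$ is a category structure with identities $\varepsilon_jy$; $\Gamma^+_ix\circ_i\Gamma^-_ix=\varepsilon_{i+1}x$, $\Gamma^+_ix\circ_{i+1}\Gamma^-_ix=\varepsilon_ix$. Folding operations on $G_n$: $\psi_ix=\Gamma^+_i\partial^-_{i+1}x\circ_{i+1}x\circ_{i+1}\Gamma^-_i\partial^+_{i+1}x$ ($1\le i\le n-1$), $\Psi_r=\psi_{r-1}\cdots\psi_1$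 ($1\le r\le n$), $\Phi_n=\Psi_1\Psi_2\cdots\Psi_n$ (so $\Phi_0=\Phi_1=\mathrm{id}$). *)

theory Defs
  imports Main
begin

text \<open>Signs \<alpha> = +/- are encoded as True/False.
  All cubical operations are indexed by the dimension n of their SOURCE:
  fc n i \<alpha> : G n -> G (n-1)   (face \<partial>^\<alpha>_i, 1 \<le> i \<le> n)
  dg n i     : G n -> G (n+1)   (degeneracy \<epsilon>_i, 1 \<le> i \<le> n+1)
  cn n i \<alpha> : G n -> G (n+1)   (connection \<Gamma>^\<alpha>_i, 1 \<le> i \<le> n)
  cmp n j    : G n x G n -> G n (composition \<circ>_j, 1 \<le> j \<le> n),
  meaningful only when fc n j True a = fc n j False b.\<close>

definition omega_cat ::
  "'a set \<Rightarrow> (nat \<Rightarrow> bool \<Rightarrow> 'a \<Rightarrow> 'a) \<Rightarrow> (nat \<Rightarrow> 'a \<Rightarrow> 'a \<Rightarrow> 'a) \<Rightarrow> bool" where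
  "omega_cat X d c \<longleftrightarrow>
    (\<forall>x\<in>X. \<forall>p \<alpha>. d p \<alpha> x \<in> X) \<and>
    (\<forall>x\<in>X. \<forall>y\<in>X. \<forall>p. d p True x = d p False y \<longrightarrow> c p x y \<in> X) \<and>
    (\<forall>x\<in>X. \<forall>p q \<alpha> \<beta>. d q \<beta> (d p \<alpha> x) = (if q < p then d q \<beta> x else d p \<alpha> x)) \<and>
    (\<forall>x\<in>X. \<forall>y\<in>X. \<forall>p. d p True x = d p False y \<longrightarrow>
        d p False (c p x y) = d p False x \<and> d p True (c p x y) = d p True y \<and>
        (\<forall>q \<beta>. q \<noteq> p \<longrightarrow> d q \<beta> (c p x y) = c p (d q \<beta> x) (d q \<beta> y))) \<and>
    (\<forall>x\<in>X. \<forall>p. c p (d p False x) x = x \<and> c p x (d p True x) = x) \<and>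
    (\<forall>x\<in>X. \<forall>y\<in>X. \<forall>z\<in>X. \<forall>p. d p True x = d p False y \<longrightarrow> d p True y = d p False z \<longrightarrow>
        c p (c p x y) z = c p x (c p y z)) \<and>
    (\<forall>x\<in>X. \<forall>y\<in>X. \<forall>x'\<in>X. \<forall>y'\<in>X. \<forall>p q. p \<noteq> q \<longrightarrow>
        d p True x = d p False y \<longrightarrow> d p True x' = d p False y' \<longrightarrow>
        d q True (c p x y) = d q False (c p x' y') \<longrightarrow>
        d q True x = d q False x' \<longrightarrow> d q True y = d q False y' \<longrightarrow>
        d p True (c q x x') = d p False (c q y y') \<longrightarrow>
        c q (c p x y) (c p x' y') = c p (c q x x') (c q y y')) \<and>
    (\<forall>x\<in>X. \<exists>m::nat. \<forall>p \<alpha>. d p \<alpha> x = x \<longleftrightarrow> m \<le> p)"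

definition omega_hom ::
  "'a set \<Rightarrow> (nat \<Rightarrow> bool \<Rightarrow> 'a \<Rightarrow> 'a) \<Rightarrow> (nat \<Rightarrow> 'a \<Rightarrow> 'a \<Rightarrow> 'a) \<Rightarrow>
   'b set \<Rightarrow> (nat \<Rightarrow> bool \<Rightarrow> 'b \<Rightarrow> 'b) \<Rightarrow> (nat \<Rightarrow> 'b \<Rightarrow> 'b \<Rightarrow> 'b) \<Rightarrow> ('a \<Rightarrow> 'b) \<Rightarrow> bool" where
  "omega_hom X d c Y d' c' f \<longleftrightarrow>
    (\<forall>x\<in>X. f x \<in> Y) \<and>
    (\<forall>x\<in>X. \<forall>p \<alpha>. f (d p \<alpha> x) = d' p \<alpha> (f x)) \<and>
    (\<forall>x\<in>X. \<forall>y\<in>X. \<forall>p. d p True x = d p False y \<longrightarrow> f (c p x y) = c' p (f x) (f y))"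

definition cubical_omega_cat_conn ::
  "(nat \<Rightarrow> 'a set) \<Rightarrow> (nat \<Rightarrow> nat \<Rightarrow> bool \<Rightarrow> 'a \<Rightarrow> 'a) \<Rightarrow> (nat \<Rightarrow> nat \<Rightarrow> 'a \<Rightarrow> 'a) \<Rightarrow>
   (nat \<Rightarrow> nat \<Rightarrow> bool \<Rightarrow> 'a \<Rightarrow> 'a) \<Rightarrow> (nat \<Rightarrow> nat \<Rightarrow> 'a \<Rightarrow> 'a \<Rightarrow> 'a) \<Rightarrow> bool" where
  "cubical_omega_cat_conn G fc dg cn cmp \<longleftrightarrow>
    \<comment> \<open>closure\<close>
    (\<forall>n. \<forall>x\<in>G n. \<forall>i \<alpha>. 1 \<le> i \<and> i \<le> n \<longrightarrow> fc n i \<alpha> x \<in> G (n - 1)) \<and>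
    (\<forall>n. \<forall>x\<in>G n. \<forall>i. 1 \<le> i \<and> i \<le> n + 1 \<longrightarrow> dg n i x \<in> G (Suc n)) \<and>
    (\<forall>n. \<forall>x\<in>G n. \<forall>i \<alpha>. 1 \<le> i \<and> i \<le> n \<longrightarrow> cn n i \<alpha> x \<in> G (Suc n)) \<and>
    (\<forall>n. \<forall>a\<in>G n. \<forall>b\<in>G n. \<forall>j. 1 \<le> j \<and> j \<le> n \<longrightarrow> fc n j True a = fc n j False b \<longrightarrow>
        cmp n j a b \<in> G n) \<and>
    \<comment> \<open>cubical identities\<close>
    (\<forall>n. \<forall>x\<in>G n. \<forall>i j \<alpha> \<beta>. 1 \<le> i \<and> i < j \<and> j \<le> n \<longrightarrow>
        fc (n - 1) i \<alpha> (fc n j \<beta> x) = fc (n - 1) (j - 1) \<beta> (fc n i \<alpha> x)) \<and>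
    (\<forall>n. \<forall>x\<in>G n. \<forall>i j. 1 \<le> i \<and> i \<le> j \<and> j \<le> n + 1 \<longrightarrow>
        dg (Suc n) i (dg n j x) = dg (Suc n) (j + 1) (dg n i x)) \<and>
    (\<forall>n. \<forall>x\<in>G n. \<forall>i j \<alpha>. 1 \<le> i \<and> i \<le> n + 1 \<and> 1 \<le> j \<and> j \<le> n + 1 \<longrightarrow>
        fc (Suc n) i \<alpha> (dg n j x) =
          (if i < j then dg (n - 1) (j - 1) (fc n i \<alpha> x)
           else if j < i then dg (n - 1) j (fc n (i - 1) \<alpha> x)
           else x)) \<and>
    \<comment> \<open>connections\<close>
    (\<forall>n. \<forall>x\<in>G n. \<forall>i j \<alpha> \<beta>. 1 \<le> i \<and> i < j \<and> j \<le> n \<longrightarrow>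
        cn (Suc n) i \<alpha> (cn n j \<beta> x) = cn (Suc n) (j + 1) \<beta> (cn n i \<alpha> x)) \<and>
    (\<forall>n. \<forall>x\<in>G n. \<forall>i \<alpha>. 1 \<le> i \<and> i \<le> n \<longrightarrow>
        cn (Suc n) i \<alpha> (cn n i \<alpha> x) = cn (Suc n) (i + 1) \<alpha> (cn n i \<alpha> x)) \<and>
    (\<forall>n. \<forall>x\<in>G n. \<forall>i j \<alpha>. 1 \<le> i \<and> i \<le> n + 1 \<and> 1 \<le> j \<and> j \<le> n + 1 \<longrightarrow>
        cn (Suc n) i \<alpha> (dg n j x) =
          (if i < j then dg (Suc n) (j + 1) (cn n i \<alpha> x)
           else if j < i then dg (Suc n) j (cn n (i - 1) \<alpha> x)
           else dg (Suc n) (j + 1) (dg n j x))) \<and>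
    (\<forall>n. \<forall>x\<in>G n. \<forall>i j \<alpha> \<beta>. 1 \<le> j \<and> j \<le> n \<and> 1 \<le> i \<and> i \<le> n + 1 \<longrightarrow>
        fc (Suc n) i \<alpha> (cn n j \<beta> x) =
          (if i < j then cn (n - 1) (j - 1) \<beta> (fc n i \<alpha> x)
           else if j + 1 < i then cn (n - 1) j \<beta> (fc n (i - 1) \<alpha> x)
           else if \<alpha> = \<beta> then x
           else dg (n - 1) j (fc n j \<alpha> x))) \<and>
    \<comment> \<open>faces of composites\<close>
    (\<forall>n. \<forall>a\<in>G n. \<forall>b\<in>G n. \<forall>j. 1 \<le> j \<and> j \<le> n \<longrightarrow> fc n j True a = fc n j False b \<longrightarrow>
        fc n j False (cmp n j a b) = fc n j False a \<and>
        fc n j True (cmp n j a b) = fc n j True b \<and>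
        (\<forall>i \<alpha>. 1 \<le> i \<and> i < j \<longrightarrow>
            fc n i \<alpha> (cmp n j a b) = cmp (n - 1) (j - 1) (fc n i \<alpha> a) (fc n i \<alpha> b)) \<and>
        (\<forall>i \<alpha>. j < i \<and> i \<le> n \<longrightarrow>
            fc n i \<alpha> (cmp n j a b) = cmp (n - 1) j (fc n i \<alpha> a) (fc n i \<alpha> b))) \<and>
    \<comment> \<open>interchange, whenever both sides are defined\<close>
    (\<forall>n. \<forall>a\<in>G n. \<forall>b\<in>G n. \<forall>c\<in>G n. \<forall>e\<in>G n. \<forall>i j.
        1 \<le> i \<and> i \<le> n \<and> 1 \<le> j \<and> j \<le> n \<and> i \<noteq> j \<longrightarrow>
        fc n i True a = fc n i False b \<longrightarrow> fc n i True c = fc n i False e \<longrightarrow>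
        fc n j True (cmp n i a b) = fc n j False (cmp n i c e) \<longrightarrow>
        fc n j True a = fc n j False c \<longrightarrow> fc n j True b = fc n j False e \<longrightarrow>
        fc n i True (cmp n j a c) = fc n i False (cmp n j b e) \<longrightarrow>
        cmp n j (cmp n i a b) (cmp n i c e) = cmp n i (cmp n j a c) (cmp n j b e)) \<and>
    \<comment> \<open>degeneracies of composites\<close>
    (\<forall>n. \<forall>a\<in>G n. \<forall>b\<in>G n. \<forall>i j. 1 \<le> j \<and> j \<le> n \<and> 1 \<le> i \<and> i \<le> n + 1 \<longrightarrow>
        fc n j True a = fc n j False b \<longrightarrow>
        dg n i (cmp n j a b) =
          (if i \<le> j then cmp (Suc n) (j + 1) (dg n i a) (dg n i b)
           else cmp (Suc n) j (dg n i a) (dg n i b))) \<and>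
    \<comment> \<open>connections of composites\<close>
    (\<forall>n. \<forall>a\<in>G n. \<forall>b\<in>G n. \<forall>i j \<alpha>. 1 \<le> j \<and> j \<le> n \<and> 1 \<le> i \<and> i \<le> n \<longrightarrow>
        fc n j True a = fc n j False b \<longrightarrow>
        cn n i \<alpha> (cmp n j a b) =
          (if i < j then cmp (Suc n) (j + 1) (cn n i \<alpha> a) (cn n i \<alpha> b)
           else if j < i then cmp (Suc n) j (cn n i \<alpha> a) (cn n i \<alpha> b)
           else if \<alpha> then
             cmp (Suc n) (j + 1) (cmp (Suc n) j (cn n j True a) (dg n j a))
                                 (cmp (Suc n) j (dg n (j + 1) a) (cn n j True b))
           else
             cmp (Suc n) (j + 1) (cmp (Suc n) j (cn n j False a) (dg n (j + 1) b))
                                 (cmp (Suc n) j (dg n j b) (cn n j False b)))) \<and>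
    \<comment> \<open>each \<circ>_j is a category with identities \<epsilon>_j y\<close>
    (\<forall>n. \<forall>a\<in>G n. \<forall>b\<in>G n. \<forall>c\<in>G n. \<forall>j. 1 \<le> j \<and> j \<le> n \<longrightarrow>
        fc n j True a = fc n j False b \<longrightarrow> fc n j True b = fc n j False c \<longrightarrow>
        cmp n j (cmp n j a b) c = cmp n j a (cmp n j b c)) \<and>
    (\<forall>n. \<forall>x\<in>G n. \<forall>j. 1 \<le> j \<and> j \<le> n \<longrightarrow>
        cmp n j (dg (n - 1) j (fc n j False x)) x = x \<and>
        cmp n j x (dg (n - 1) j (fc n j True x)) = x) \<and>
    \<comment> \<open>connection identities\<close>
    (\<forall>n. \<forall>x\<in>G n. \<forall>i. 1 \<le> i \<and> i \<le> n \<longrightarrow>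
        cmp (Suc n) i (cn n i True x) (cn n i False x) = dg n (i + 1) x \<and>
        cmp (Suc n) (i + 1) (cn n i True x) (cn n i False x) = dg n i x)"

definition psi :: "(nat \<Rightarrow> nat \<Rightarrow> bool \<Rightarrow> 'a \<Rightarrow> 'a) \<Rightarrow> (nat \<Rightarrow> nat \<Rightarrow> bool \<Rightarrow> 'a \<Rightarrow> 'a) \<Rightarrow>
   (nat \<Rightarrow> nat \<Rightarrow> 'a \<Rightarrow> 'a \<Rightarrow> 'a) \<Rightarrow> nat \<Rightarrow> nat \<Rightarrow> 'a \<Rightarrow> 'a" where
  "psi fc cn cmp n i x =
     cmp n (i + 1) (cmp n (i + 1) (cn (n - 1) i True (fc n (i + 1) False x)) x)
                   (cn (n - 1) i False (fc n (i + 1) True x))"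

text \<open>\<Psi>_r = \<psi>_{r-1} \<circ> ... \<circ> \<psi>_1 (\<psi>_1 applied first); \<Psi>_1 = id.\<close>
fun Psi :: "(nat \<Rightarrow> nat \<Rightarrow> bool \<Rightarrow> 'a \<Rightarrow> 'a) \<Rightarrow> (nat \<Rightarrow> nat \<Rightarrow> bool \<Rightarrow> 'a \<Rightarrow> 'a) \<Rightarrow>
   (nat \<Rightarrow> nat \<Rightarrow> 'a \<Rightarrow> 'a \<Rightarrow> 'a) \<Rightarrow> nat \<Rightarrow> nat \<Rightarrow> 'a \<Rightarrow> 'a" where
  "Psi fc cn cmp n 0 x = x"
| "Psi fc cn cmp n (Suc 0) x = x"
| "Psi fc cn cmp n (Suc (Suc r)) x = psi fc cn cmp n (Suc r) (Psi fc cn cmp n (Suc r) x)"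

text \<open>Phi_aux n k = \<Psi>_1 \<circ> \<Psi>_2 \<circ> ... \<circ> \<Psi>_k on G n; \<Phi>_n = Phi_aux n n.\<close>
fun Phi_aux :: "(nat \<Rightarrow> nat \<Rightarrow> bool \<Rightarrow> 'a \<Rightarrow> 'a) \<Rightarrow> (nat \<Rightarrow> nat \<Rightarrow> bool \<Rightarrow> 'a \<Rightarrow> 'a) \<Rightarrow>
   (nat \<Rightarrow> nat \<Rightarrow> 'a \<Rightarrow> 'a \<Rightarrow> 'a) \<Rightarrow> nat \<Rightarrow> nat \<Rightarrow> 'a \<Rightarrow> 'a" where
  "Phi_aux fc cn cmp n 0 x = x"
| "Phi_aux fc cn cmp n (Suc k) x = Phi_aux fc cn cmp n k (Psi fc cn cmp n (Suc k) x)"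

definition Phi :: "(nat \<Rightarrow> nat \<Rightarrow> bool \<Rightarrow> 'a \<Rightarrow> 'a) \<Rightarrow> (nat \<Rightarrow> nat \<Rightarrow> bool \<Rightarrow> 'a \<Rightarrow> 'a) \<Rightarrow>
   (nat \<Rightarrow> nat \<Rightarrow> 'a \<Rightarrow> 'a \<Rightarrow> 'a) \<Rightarrow> nat \<Rightarrow> 'a \<Rightarrow> 'a" where
  "Phi fc cn cmp n = Phi_aux fc cn cmp n n"

fun faces1 :: "(nat \<Rightarrow> nat \<Rightarrow> bool \<Rightarrow> 'a \<Rightarrow> 'a) \<Rightarrow> nat \<Rightarrow> nat \<Rightarrow> bool \<Rightarrow> 'a \<Rightarrow> 'a" where
  "faces1 fc n 0 \<alpha> x = x"
| "faces1 fc n (Suc k) \<alpha> x = faces1 fc (n - 1) k \<alpha> (fc n 1 \<alpha> x)"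

fun degs1 :: "(nat \<Rightarrow> nat \<Rightarrow> 'a \<Rightarrow> 'a) \<Rightarrow> nat \<Rightarrow> nat \<Rightarrow> 'a \<Rightarrow> 'a" where
  "degs1 dg p 0 x = x"
| "degs1 dg p (Suc k) x = dg (p + k) 1 (degs1 dg p k x)"

definition Phi_d :: "(nat \<Rightarrow> nat \<Rightarrow> bool \<Rightarrow> 'a \<Rightarrow> 'a) \<Rightarrow> (nat \<Rightarrow> nat \<Rightarrow> 'a \<Rightarrow> 'a) \<Rightarrow>
   nat \<Rightarrow> nat \<Rightarrow> bool \<Rightarrow> 'a \<Rightarrow> 'a" where
  "Phi_d fc dg n p \<alpha> x = (if p < n then degs1 dg p (n - p) (faces1 fc n (n - p) \<alpha> x) else x)"

text \<open>For p \<ge> n, x #_p y is defined only when x = y, and then equals x.\<close>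
definition Phi_c :: "(nat \<Rightarrow> nat \<Rightarrow> 'a \<Rightarrow> 'a \<Rightarrow> 'a) \<Rightarrow> nat \<Rightarrow> nat \<Rightarrow> 'a \<Rightarrow> 'a \<Rightarrow> 'a" where
  "Phi_c cmp n p x y = (if p < n then cmp n (n - p) x y else x)"

end

theory Submission
  imports Defs
begin

text \<open>Call an \<open>n\<close>-cube \<open>x\<close> \<^emph>\<open>folded\<close> if every face \<open>\<partial>\<^sup>\<alpha>\<^sub>j x\<close> with \<open>j \<ge> 2\<close> is a
  \<open>(j-1)\<close>-fold degeneracy \<open>\<epsilon>\<^sub>1\<^sup>j\<^sup>-\<^sup>1 z\<close>. The map \<open>\<psi>\<^sub>i\<close> fixes every cube whose \<open>(i+1)\<close>-faces are
  \<open>\<epsilon>\<^sub>i\<close>-degenerate, and \<open>\<Psi>\<^sub>r\<close> makes the r-th faces degenerate while commuting with the faces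
  above r; hence \<open>\<Phi>\<^sub>n\<close> is a retraction of \<open>G\<^sub>n\<close> onto the folded cubes, and these form \<open>\<Phi>\<^sub>n(G\<^sub>n)\<close>.

  On a folded cube \<open>\<partial>\<^sub>1\<partial>\<^sub>1\<close> forgets the inner sign, so \<open>(\<partial>\<^sub>1)\<^sup>k x\<close> depends only on the last
  sign, and \<open>\<partial>\<^sup>\<alpha>\<^sub>k x = \<epsilon>\<^sub>1\<^sup>k\<^sup>-\<^sup>1(\<partial>\<^sup>\<alpha>\<^sub>1)\<^sup>k x\<close>. This yields the globular laws for \<open>d\<^sub>p\<close>, shows that
  \<open>d\<^sup>\<alpha>\<^sub>p = \<epsilon>\<^sub>n\<^sub>-\<^sub>p\<partial>\<^sup>\<alpha>\<^sub>n\<^sub>-\<^sub>p\<close> on folded cubes and that \<open>#\<^sub>p\<close>-composability coincides with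
  \<open>\<circ>\<^sub>n\<^sub>-\<^sub>p\<close>-composability; the \<open>\<omega>\<close>-category axioms are then inherited from the cubical ones.
  Finally \<open>\<epsilon>\<^sub>1\<close> preserves foldedness and commutes with all the operations.\<close>

section \<open>Cubical \<omega>-categories with connections\<close>

locale cubical_conn =
  fixes G :: "nat \<Rightarrow> 'a set"
    and fc :: "nat \<Rightarrow> nat \<Rightarrow> bool \<Rightarrow> 'a \<Rightarrow> 'a"
    and dg :: "nat \<Rightarrow> nat \<Rightarrow> 'a \<Rightarrow> 'a"
    and cn :: "nat \<Rightarrow> nat \<Rightarrow> bool \<Rightarrow> 'a \<Rightarrow> 'a"
    and cmp :: "nat \<Rightarrow> nat \<Rightarrow> 'a \<Rightarrow> 'a \<Rightarrow> 'a"
  assumes cubical: "cubical_omega_cat_conn G fc dg cn cmp"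
begin

lemma fc_closed: "x \<in> G n \<Longrightarrow> 1 \<le> i \<Longrightarrow> i \<le> n \<Longrightarrow> fc n i \<alpha> x \<in> G (n - 1)"
  using cubical unfolding cubical_omega_cat_conn_def by meson

lemma dg_closed: "x \<in> G n \<Longrightarrow> 1 \<le> i \<Longrightarrow> i \<le> n + 1 \<Longrightarrow> dg n i x \<in> G (Suc n)"
  using cubical unfolding cubical_omega_cat_conn_def by meson

lemma cn_closed: "x \<in> G n \<Longrightarrow> 1 \<le> i \<Longrightarrow> i \<le> n \<Longrightarrow> cn n i \<alpha> x \<in> G (Suc n)"
  using cubical unfolding cubical_omega_cat_conn_def by meson

lemma cmp_closed:
  "a \<in> G n \<Longrightarrow> b \<in> G n \<Longrightarrow> 1 \<le> j \<Longrightarrow> j \<le> n \<Longrightarrow> fc n j True a = fc n j False b \<Longrightarrow>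
   cmp n j a b \<in> G n"
  using cubical unfolding cubical_omega_cat_conn_def by meson

lemma fc_fc:
  "x \<in> G n \<Longrightarrow> 1 \<le> i \<Longrightarrow> i < j \<Longrightarrow> j \<le> n \<Longrightarrow>
   fc (n - 1) i \<alpha> (fc n j \<beta> x) = fc (n - 1) (j - 1) \<beta> (fc n i \<alpha> x)"
  using cubical unfolding cubical_omega_cat_conn_def by meson

lemma dg_dg:
  "x \<in> G n \<Longrightarrow> 1 \<le> i \<Longrightarrow> i \<le> j \<Longrightarrow> j \<le> n + 1 \<Longrightarrow>
   dg (Suc n) i (dg n j x) = dg (Suc n) (j + 1) (dg n i x)"
  using cubical unfolding cubical_omega_cat_conn_def by meson

lemma fc_dg:
  "x \<in> G n \<Longrightarrow> 1 \<le> i \<Longrightarrow> i \<le> n + 1 \<Longrightarrow> 1 \<le> j \<Longrightarrow> j \<le> n + 1 \<Longrightarrow>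
   fc (Suc n) i \<alpha> (dg n j x) =
     (if i < j then dg (n - 1) (j - 1) (fc n i \<alpha> x)
      else if j < i then dg (n - 1) j (fc n (i - 1) \<alpha> x)
      else x)"
  using cubical unfolding cubical_omega_cat_conn_def by meson

lemma fc_dg_same: "x \<in> G n \<Longrightarrow> 1 \<le> i \<Longrightarrow> i \<le> n + 1 \<Longrightarrow> fc (Suc n) i \<alpha> (dg n i x) = x"
  by (simp add: fc_dg)

lemma fc_dg_greater:
  "x \<in> G n \<Longrightarrow> 1 \<le> j \<Longrightarrow> j < i \<Longrightarrow> i \<le> n + 1 \<Longrightarrow>
   fc (Suc n) i \<alpha> (dg n j x) = dg (n - 1) j (fc n (i - 1) \<alpha> x)"
  by (simp add: fc_dg)

lemma cn_dg:
  "x \<in> G n \<Longrightarrow> 1 \<le> i \<Longrightarrow> i \<le> n + 1 \<Longrightarrow> 1 \<le> j \<Longrightarrow> j \<le> n + 1 \<Longrightarrow>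
   cn (Suc n) i \<alpha> (dg n j x) =
     (if i < j then dg (Suc n) (j + 1) (cn n i \<alpha> x)
      else if j < i then dg (Suc n) j (cn n (i - 1) \<alpha> x)
      else dg (Suc n) (j + 1) (dg n j x))"
  using cubical unfolding cubical_omega_cat_conn_def by meson

lemma cn_dg_same:
  "x \<in> G n \<Longrightarrow> 1 \<le> i \<Longrightarrow> i \<le> n + 1 \<Longrightarrow> cn (Suc n) i \<alpha> (dg n i x) = dg (Suc n) (i + 1) (dg n i x)"
  by (simp add: cn_dg)

lemma fc_cn:
  "x \<in> G n \<Longrightarrow> 1 \<le> j \<Longrightarrow> j \<le> n \<Longrightarrow> 1 \<le> i \<Longrightarrow> i \<le> n + 1 \<Longrightarrow>
   fc (Suc n) i \<alpha> (cn n j \<beta> x) =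
     (if i < j then cn (n - 1) (j - 1) \<beta> (fc n i \<alpha> x)
      else if j + 1 < i then cn (n - 1) j \<beta> (fc n (i - 1) \<alpha> x)
      else if \<alpha> = \<beta> then x
      else dg (n - 1) j (fc n j \<alpha> x))"
  using cubical unfolding cubical_omega_cat_conn_def by (elim conjE) (metis (no_types))

lemma fc_cmp:
  "a \<in> G n \<Longrightarrow> b \<in> G n \<Longrightarrow> 1 \<le> j \<Longrightarrow> j \<le> n \<Longrightarrow> fc n j True a = fc n j False b \<Longrightarrow>
   fc n j False (cmp n j a b) = fc n j False a \<and>
   fc n j True (cmp n j a b) = fc n j True b \<and>
   (\<forall>i \<alpha>. 1 \<le> i \<and> i < j \<longrightarrow>
      fc n i \<alpha> (cmp n j a b) = cmp (n - 1) (j - 1) (fc n i \<alpha> a) (fc n i \<alpha> b)) \<and>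
   (\<forall>i \<alpha>. j < i \<and> i \<le> n \<longrightarrow>
      fc n i \<alpha> (cmp n j a b) = cmp (n - 1) j (fc n i \<alpha> a) (fc n i \<alpha> b))"
  using cubical unfolding cubical_omega_cat_conn_def by meson

lemma fc_cmp_source:
  "a \<in> G n \<Longrightarrow> b \<in> G n \<Longrightarrow> 1 \<le> j \<Longrightarrow> j \<le> n \<Longrightarrow> fc n j True a = fc n j False b \<Longrightarrow>
   fc n j False (cmp n j a b) = fc n j False a"
  by (simp add: fc_cmp)

lemma fc_cmp_target:
  "a \<in> G n \<Longrightarrow> b \<in> G n \<Longrightarrow> 1 \<le> j \<Longrightarrow> j \<le> n \<Longrightarrow> fc n j True a = fc n j False b \<Longrightarrow>
   fc n j True (cmp n j a b) = fc n j True b"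
  by (simp add: fc_cmp)

lemma fc_cmp_below:
  "a \<in> G n \<Longrightarrow> b \<in> G n \<Longrightarrow> 1 \<le> i \<Longrightarrow> i < j \<Longrightarrow> j \<le> n \<Longrightarrow> fc n j True a = fc n j False b \<Longrightarrow>
   fc n i \<alpha> (cmp n j a b) = cmp (n - 1) (j - 1) (fc n i \<alpha> a) (fc n i \<alpha> b)"
  by (simp add: fc_cmp)

lemma fc_cmp_above:
  "a \<in> G n \<Longrightarrow> b \<in> G n \<Longrightarrow> 1 \<le> j \<Longrightarrow> j < i \<Longrightarrow> i \<le> n \<Longrightarrow> fc n j True a = fc n j False b \<Longrightarrow>
   fc n i \<alpha> (cmp n j a b) = cmp (n - 1) j (fc n i \<alpha> a) (fc n i \<alpha> b)"
  by (simp add: fc_cmp)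

lemma cmp_interchange:
  "a \<in> G n \<Longrightarrow> b \<in> G n \<Longrightarrow> c \<in> G n \<Longrightarrow> e \<in> G n \<Longrightarrow>
   1 \<le> i \<Longrightarrow> i \<le> n \<Longrightarrow> 1 \<le> j \<Longrightarrow> j \<le> n \<Longrightarrow> i \<noteq> j \<Longrightarrow>
   fc n i True a = fc n i False b \<Longrightarrow> fc n i True c = fc n i False e \<Longrightarrow>
   fc n j True (cmp n i a b) = fc n j False (cmp n i c e) \<Longrightarrow>
   fc n j True a = fc n j False c \<Longrightarrow> fc n j True b = fc n j False e \<Longrightarrow>
   fc n i True (cmp n j a c) = fc n i False (cmp n j b e) \<Longrightarrow>
   cmp n j (cmp n i a b) (cmp n i c e) = cmp n i (cmp n j a c) (cmp n j b e)"
  using cubical unfolding cubical_omega_cat_conn_def by meson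

lemma dg_cmp:
  "a \<in> G n \<Longrightarrow> b \<in> G n \<Longrightarrow> 1 \<le> j \<Longrightarrow> j \<le> n \<Longrightarrow> 1 \<le> i \<Longrightarrow> i \<le> n + 1 \<Longrightarrow>
   fc n j True a = fc n j False b \<Longrightarrow>
   dg n i (cmp n j a b) =
     (if i \<le> j then cmp (Suc n) (j + 1) (dg n i a) (dg n i b)
      else cmp (Suc n) j (dg n i a) (dg n i b))"
  using cubical unfolding cubical_omega_cat_conn_def by meson

lemma dg_cmp_le:
  "a \<in> G n \<Longrightarrow> b \<in> G n \<Longrightarrow> 1 \<le> i \<Longrightarrow> i \<le> j \<Longrightarrow> j \<le> n \<Longrightarrow> fc n j True a = fc n j False b \<Longrightarrow>
   dg n i (cmp n j a b) = cmp (Suc n) (j + 1) (dg n i a) (dg n i b)"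
  by (simp add: dg_cmp)

lemma cmp_assoc:
  "a \<in> G n \<Longrightarrow> b \<in> G n \<Longrightarrow> c \<in> G n \<Longrightarrow> 1 \<le> j \<Longrightarrow> j \<le> n \<Longrightarrow>
   fc n j True a = fc n j False b \<Longrightarrow> fc n j True b = fc n j False c \<Longrightarrow>
   cmp n j (cmp n j a b) c = cmp n j a (cmp n j b c)"
  using cubical unfolding cubical_omega_cat_conn_def by meson

lemma cmp_dg_left_unit:
  "x \<in> G n \<Longrightarrow> 1 \<le> j \<Longrightarrow> j \<le> n \<Longrightarrow> cmp n j (dg (n - 1) j (fc n j False x)) x = x"
  using cubical unfolding cubical_omega_cat_conn_def by meson

lemma cmp_dg_right_unit:
  "x \<in> G n \<Longrightarrow> 1 \<le> j \<Longrightarrow> j \<le> n \<Longrightarrow> cmp n j x (dg (n - 1) j (fc n j True x)) = x"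
  using cubical unfolding cubical_omega_cat_conn_def by meson

end

section \<open>Iterated faces and degeneracies\<close>

lemma faces1_add: "faces1 fc n (a + b) \<alpha> x = faces1 fc (n - a) b \<alpha> (faces1 fc n a \<alpha> x)"
  by (induction a arbitrary: n x) simp_all

lemma faces1_Suc_right: "faces1 fc n (Suc k) \<alpha> x = fc (n - k) 1 \<alpha> (faces1 fc n k \<alpha> x)"
  using faces1_add[of fc n k 1 \<alpha> x] by simp

lemma degs1_add: "degs1 dg p (a + b) z = degs1 dg (p + a) b (degs1 dg p a z)"
  by (induction b) (simp_all add: add.assoc)

context cubical_conn
begin

lemma faces1_closed: "x \<in> G n \<Longrightarrow> k \<le> n \<Longrightarrow> faces1 fc n k \<alpha> x \<in> G (n - k)"
proof (induction k arbitrary: n x)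
  case 0
  then show ?case by simp
next
  case (Suc k)
  then have "fc n 1 \<alpha> x \<in> G (n - 1)"
    using fc_closed[of x n 1] by simp
  with Suc.IH[of "fc n 1 \<alpha> x" "n - 1"] Suc.prems show ?case
    by simp
qed

lemma degs1_closed: "z \<in> G p \<Longrightarrow> degs1 dg p k z \<in> G (p + k)"
  by (induction k) (auto intro: dg_closed)

lemma degs1_Suc_eq_dg:
  "z \<in> G p \<Longrightarrow> 1 \<le> i \<Longrightarrow> i \<le> k + 1 \<Longrightarrow> degs1 dg p (Suc k) z = dg (p + k) i (degs1 dg p k z)"
proof (induction k arbitrary: i)
  case 0
  then show ?case by simp
next
  case (Suc k)
  show ?case
  proof (cases "i = 1")
    case True
    then show ?thesis by simp
  next
    case False
    with Suc.prems obtain i' where i': "i = Suc i'" "1 \<le> i'" "i' \<le> k + 1"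
      by (cases i) auto
    have "degs1 dg p (Suc (Suc k)) z = dg (p + Suc k) 1 (dg (p + k) i' (degs1 dg p k z))"
      using Suc.IH[OF Suc.prems(1) i'(2,3)] by simp
    also have "\<dots> = dg (p + Suc k) i (dg (p + k) 1 (degs1 dg p k z))"
      using dg_dg[OF degs1_closed[OF Suc.prems(1)], of 1 i'] i' by simp
    finally show ?thesis by simp
  qed
qed

lemma fc_degs1_low:
  assumes z: "z \<in> G p" and j: "1 \<le> j" "j \<le> k"
  shows "fc (p + k) j \<alpha> (degs1 dg p k z) = degs1 dg p (k - 1) z"
proof -
  obtain k' where k: "k = Suc k'"
    using j by (cases k) auto
  have "degs1 dg p k z = dg (p + k') j (degs1 dg p k' z)"
    using degs1_Suc_eq_dg[OF z j(1), of k'] j k by simp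
  then show ?thesis
    using fc_dg_same[OF degs1_closed[OF z], of j] j k by simp
qed

lemma fc_degs1_high:
  "z \<in> G p \<Longrightarrow> k < j \<Longrightarrow> j \<le> p + k \<Longrightarrow>
   fc (p + k) j \<alpha> (degs1 dg p k z) = degs1 dg (p - 1) k (fc p (j - k) \<alpha> z)"
proof (induction k arbitrary: j)
  case 0
  then show ?case by simp
next
  case (Suc k)
  have "fc (p + Suc k) j \<alpha> (degs1 dg p (Suc k) z) =
        dg (p + k - 1) 1 (fc (p + k) (j - 1) \<alpha> (degs1 dg p k z))"
    using fc_dg_greater[OF degs1_closed[OF Suc.prems(1)], of 1 j] Suc.prems by simp
  also have "\<dots> = dg (p + k - 1) 1 (degs1 dg (p - 1) k (fc p (j - Suc k) \<alpha> z))"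
    using Suc.IH[of "j - 1"] Suc.prems by simp
  also have "\<dots> = degs1 dg (p - 1) (Suc k) (fc p (j - Suc k) \<alpha> z)"
    using Suc.prems by simp
  finally show ?case .
qed

lemma faces1_degs1:
  "z \<in> G p \<Longrightarrow> m \<le> k \<Longrightarrow> faces1 fc (p + k) m \<alpha> (degs1 dg p k z) = degs1 dg p (k - m) z"
proof (induction m)
  case 0
  then show ?case by simp
next
  case (Suc m)
  have "faces1 fc (p + k) (Suc m) \<alpha> (degs1 dg p k z) =
        fc (p + k - m) 1 \<alpha> (faces1 fc (p + k) m \<alpha> (degs1 dg p k z))"
    by (rule faces1_Suc_right)
  also have "\<dots> = fc (p + (k - m)) 1 \<alpha> (degs1 dg p (k - m) z)"
    using Suc by simp
  also have "\<dots> = degs1 dg p (k - Suc m) z"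
    using fc_degs1_low[OF Suc.prems(1), of 1 "k - m"] Suc.prems by simp
  finally show ?case .
qed

lemma degs1_inj:
  assumes z: "z \<in> G p" and z': "z' \<in> G p" and eq: "degs1 dg p k z = degs1 dg p k z'"
  shows "z = z'"
proof -
  have "z = faces1 fc (p + k) k True (degs1 dg p k z)"
    using faces1_degs1[OF z, of k k True] by simp
  also have "\<dots> = z'"
    using faces1_degs1[OF z', of k k True] eq by simp
  finally show ?thesis .
qed

lemma faces1_fc:
  "x \<in> G n \<Longrightarrow> m < j \<Longrightarrow> j \<le> n \<Longrightarrow>
   faces1 fc (n - 1) m \<beta> (fc n j \<alpha> x) = fc (n - m) (j - m) \<alpha> (faces1 fc n m \<beta> x)"
proof (induction m arbitrary: n x j)
  case 0
  then show ?case by simp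
next
  case (Suc m)
  have "faces1 fc (n - 1) (Suc m) \<beta> (fc n j \<alpha> x) = faces1 fc (n - 1 - 1) m \<beta> (fc (n - 1) 1 \<beta> (fc n j \<alpha> x))"
    by simp
  also have "\<dots> = faces1 fc (n - 1 - 1) m \<beta> (fc (n - 1) (j - 1) \<alpha> (fc n 1 \<beta> x))"
    using fc_fc[of x n 1 j \<beta> \<alpha>] Suc.prems by simp
  also have "\<dots> = fc (n - 1 - m) (j - 1 - m) \<alpha> (faces1 fc (n - 1) m \<beta> (fc n 1 \<beta> x))"
    using Suc.IH[OF fc_closed[OF Suc.prems(1), of 1 \<beta>], of "j - 1"] Suc.prems by simp
  finally show ?case by simp
qed

lemma cmp_degs1_self:
  assumes z: "z \<in> G p" and i: "1 \<le> i" "i \<le> k"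
  shows "cmp (p + k) i (degs1 dg p k z) (degs1 dg p k z) = degs1 dg p k z"
proof -
  obtain k' where k: "k = Suc k'"
    using i by (cases k) auto
  define w where "w = degs1 dg p k' z"
  have w: "w \<in> G (p + k')"
    using degs1_closed[OF z] w_def by simp
  have deg: "degs1 dg p k z = dg (p + k') i w"
    using degs1_Suc_eq_dg[OF z i(1), of k'] i k w_def by simp
  have "cmp (Suc (p + k')) i (dg (p + k') i w) (dg (p + k') i w) = dg (p + k') i w"
    using cmp_dg_left_unit[OF dg_closed[OF w, of i], of i] fc_dg_same[OF w, of i False] i k by simp
  then show ?thesis
    using deg k by simp
qed

lemma cmp_degs1:
  assumes a: "a \<in> G p" and b: "b \<in> G p" and i: "1 \<le> i" "i \<le> p"
    and ab: "fc p i True a = fc p i False b"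
  shows "cmp (p + k) (i + k) (degs1 dg p k a) (degs1 dg p k b) = degs1 dg p k (cmp p i a b)"
proof (induction k)
  case 0
  then show ?case by simp
next
  case (Suc k)
  have "fc (p + k) (i + k) True (degs1 dg p k a) = fc (p + k) (i + k) False (degs1 dg p k b)"
    using fc_degs1_high[OF a, of k "i + k"] fc_degs1_high[OF b, of k "i + k"] ab i by simp
  then have "dg (p + k) 1 (cmp (p + k) (i + k) (degs1 dg p k a) (degs1 dg p k b)) =
             cmp (Suc (p + k)) (i + k + 1) (degs1 dg p (Suc k) a) (degs1 dg p (Suc k) b)"
    using dg_cmp_le[OF degs1_closed[OF a] degs1_closed[OF b], of 1 "i + k"] i by simp
  then show ?case
    using Suc.IH by simp
qed

section \<open>Folded cubes\<close>

definition folded :: "nat \<Rightarrow> 'a \<Rightarrow> bool" where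
  "folded n x \<longleftrightarrow> x \<in> G n \<and>
     (\<forall>j \<alpha>. 2 \<le> j \<and> j \<le> n \<longrightarrow> (\<exists>z\<in>G (n - j). fc n j \<alpha> x = degs1 dg (n - j) (j - 1) z))"

lemma foldedI:
  "x \<in> G n \<Longrightarrow>
   (\<And>j \<alpha>. 2 \<le> j \<Longrightarrow> j \<le> n \<Longrightarrow> \<exists>z\<in>G (n - j). fc n j \<alpha> x = degs1 dg (n - j) (j - 1) z) \<Longrightarrow>
   folded n x"
  unfolding folded_def by blast

lemma folded_closed: "folded n x \<Longrightarrow> x \<in> G n"
  unfolding folded_def by blast

lemma foldedD:
  "folded n x \<Longrightarrow> 2 \<le> j \<Longrightarrow> j \<le> n \<Longrightarrow> \<exists>z\<in>G (n - j). fc n j \<alpha> x = degs1 dg (n - j) (j - 1) z"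
  unfolding folded_def by blast

lemma folded_fc1:
  assumes g: "folded n x" and n: "1 \<le> n"
  shows "folded (n - 1) (fc n 1 \<alpha> x)"
proof (rule foldedI)
  have x: "x \<in> G n"
    using folded_closed[OF g] .
  show "fc n 1 \<alpha> x \<in> G (n - 1)"
    using fc_closed[OF x, of 1] n by simp
  fix j \<beta> assume j: "2 \<le> j" "j \<le> n - 1"
  have "2 \<le> j + 1" "j + 1 \<le> n"
    using j by arith+
  then obtain z where z: "z \<in> G (n - (j + 1))" "fc n (j + 1) \<beta> x = degs1 dg (n - (j + 1)) j z"
    using foldedD[OF g, of "j + 1" \<beta>] by auto
  have dim: "n - (j + 1) + j = n - 1"
    using j by arith
  have "fc (n - 1) j \<beta> (fc n 1 \<alpha> x) = fc (n - 1) 1 \<alpha> (fc n (j + 1) \<beta> x)"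
    using fc_fc[OF x, of 1 "j + 1" \<alpha> \<beta>] j by simp
  also have "\<dots> = degs1 dg (n - (j + 1)) (j - 1) z"
    using fc_degs1_low[OF z(1), of 1 j \<alpha>, unfolded dim] z(2) j by simp
  finally show "\<exists>z\<in>G (n - 1 - j). fc (n - 1) j \<beta> (fc n 1 \<alpha> x) = degs1 dg (n - 1 - j) (j - 1) z"
    using z(1) by (intro bexI[of _ z]) (simp_all add: diff_diff_add)
qed

lemma folded_faces1: "folded n x \<Longrightarrow> k \<le> n \<Longrightarrow> folded (n - k) (faces1 fc n k \<alpha> x)"
proof (induction k arbitrary: n x)
  case 0
  then show ?case by simp
next
  case (Suc k)
  then have "folded (n - 1) (fc n 1 \<alpha> x)"
    using folded_fc1[of n x \<alpha>] by simp
  with Suc.IH[of "n - 1" "fc n 1 \<alpha> x"] Suc.prems show ?case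
    by simp
qed

lemma folded_dg1:
  assumes g: "folded n x"
  shows "folded (Suc n) (dg n 1 x)"
proof (rule foldedI)
  have x: "x \<in> G n"
    using folded_closed[OF g] .
  show "dg n 1 x \<in> G (Suc n)"
    using dg_closed[OF x] by simp
  fix j \<beta> assume j: "2 \<le> j" "j \<le> Suc n"
  have face: "fc (Suc n) j \<beta> (dg n 1 x) = dg (n - 1) 1 (fc n (j - 1) \<beta> x)"
    using fc_dg_greater[OF x, of 1 j \<beta>] j by simp
  show "\<exists>z\<in>G (Suc n - j). fc (Suc n) j \<beta> (dg n 1 x) = degs1 dg (Suc n - j) (j - 1) z"
  proof (cases "j = 2")
    case True
    then show ?thesis
      using face fc_closed[OF x, of 1 \<beta>] j by (intro bexI[of _ "fc n 1 \<beta> x"]) simp_all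
  next
    case False
    then obtain j' where j': "j = Suc (Suc j')" "1 \<le> j'"
      using j by (cases j; cases "j - 1") auto
    obtain z where z: "z \<in> G (n - Suc j')" "fc n (Suc j') \<beta> x = degs1 dg (n - Suc j') j' z"
      using foldedD[OF g, of "Suc j'" \<beta>] j j' by auto
    have "n - Suc j' + j' = n - 1"
      using j j' by arith
    then have "dg (n - 1) 1 (degs1 dg (n - Suc j') j' z) = degs1 dg (n - Suc j') (Suc j') z"
      by simp
    then show ?thesis
      using face z j' by (intro bexI[of _ z]) simp_all
  qed
qed

lemma folded_degs1: "folded p z \<Longrightarrow> folded (p + k) (degs1 dg p k z)"
proof (induction k)
  case 0
  then show ?case by simp
next
  case (Suc k)
  then show ?case
    using folded_dg1[OF Suc.IH] by simp
qed

lemma folded_fc_eq: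
  assumes g: "folded n x" and k: "1 \<le> k" "k \<le> n"
  shows "fc n k \<alpha> x = degs1 dg (n - k) (k - 1) (faces1 fc n k \<alpha> x)"
proof (cases "k = 1")
  case True
  then show ?thesis by simp
next
  case False
  obtain z where z: "z \<in> G (n - k)" "fc n k \<alpha> x = degs1 dg (n - k) (k - 1) z"
    using foldedD[OF g, of k \<alpha>] k False by auto
  have dim: "n - k + (k - 1) = n - 1"
    using k by arith
  have "faces1 fc n k \<alpha> x = faces1 fc (n - 1) (k - 1) \<alpha> (fc n k \<alpha> x)"
    using faces1_fc[OF folded_closed[OF g], of "k - 1" k \<alpha> \<alpha>] faces1_Suc_right[of fc n "k - 1" \<alpha> x] k
    by simp
  also have "\<dots> = z"
    using faces1_degs1[OF z(1), of "k - 1" "k - 1" \<alpha>, unfolded dim] z(2) by simp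
  finally show ?thesis
    using z(2) by simp
qed

text \<open>On a folded cube \<open>\<partial>\<^sub>2\<close> is \<open>\<epsilon>\<^sub>1\<close>-degenerate, so \<open>\<partial>\<^sub>1\<partial>\<^sub>1\<close> depends only on the outer sign.\<close>

lemma folded_fc1_fc1:
  assumes g: "folded n x" and n: "2 \<le> n"
  shows "fc (n - 1) 1 \<beta> (fc n 1 \<alpha> x) = fc (n - 1) 1 \<beta> (fc n 1 \<beta> x)"
proof -
  have x: "x \<in> G n"
    using folded_closed[OF g] .
  obtain z where z: "z \<in> G (n - 2)" "fc n 2 \<beta> x = dg (n - 2) 1 z"
    using foldedD[OF g, of 2 \<beta>] n by auto
  have dim: "Suc (n - 2) = n - 1"
    using n by arith
  have "fc (n - 1) 1 \<beta> (fc n 1 \<alpha> x) = fc (n - 1) 1 \<alpha> (fc n 2 \<beta> x)"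
    using fc_fc[OF x, of 1 2 \<alpha> \<beta>] n by simp
  also have "\<dots> = fc (n - 1) 1 \<beta> (fc n 2 \<beta> x)"
    using fc_dg_same[OF z(1), of 1] z(2) dim by simp
  also have "\<dots> = fc (n - 1) 1 \<beta> (fc n 1 \<beta> x)"
    using fc_fc[OF x, of 1 2 \<beta> \<beta>] n by simp
  finally show ?thesis .
qed

lemma faces1_faces1_folded:
  "folded n x \<Longrightarrow> 1 \<le> m \<Longrightarrow> m + l \<le> n \<Longrightarrow>
   faces1 fc (n - l) m \<beta> (faces1 fc n l \<alpha> x) = faces1 fc n (m + l) \<beta> x"
proof (induction l arbitrary: n x)
  case 0
  then show ?case by simp
next
  case (Suc l)
  obtain r where r: "m + l = Suc r"
    using Suc.prems by (cases "m + l") auto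
  have "faces1 fc (n - Suc l) m \<beta> (faces1 fc n (Suc l) \<alpha> x) =
        faces1 fc (n - 1 - l) m \<beta> (faces1 fc (n - 1) l \<alpha> (fc n 1 \<alpha> x))"
    by simp
  also have "\<dots> = faces1 fc (n - 1) (m + l) \<beta> (fc n 1 \<alpha> x)"
    using Suc.IH[OF folded_fc1] Suc.prems by simp
  also have "\<dots> = faces1 fc (n - 1 - 1) r \<beta> (fc (n - 1) 1 \<beta> (fc n 1 \<beta> x))"
    using r folded_fc1_fc1[OF Suc.prems(1), of \<beta> \<alpha>] Suc.prems by simp
  also have "\<dots> = faces1 fc n (m + Suc l) \<beta> x"
    using r by simp
  finally show ?case .
qed

lemma folded_fc_eq_iff_faces1_eq:
  assumes gx: "folded n x" and gy: "folded n y" and k: "1 \<le> k" "k \<le> n"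
  shows "fc n k True x = fc n k False y \<longleftrightarrow> faces1 fc n k True x = faces1 fc n k False y"
  using folded_fc_eq[OF gx k, of True] folded_fc_eq[OF gy k, of False]
    degs1_inj[OF faces1_closed[OF folded_closed[OF gx] k(2)] faces1_closed[OF folded_closed[OF gy] k(2)]]
  by auto

lemma degenerate_fc_cmp_below:
  assumes x: "x \<in> G n" and y: "y \<in> G n" and jk: "2 \<le> j" "j < k" "k \<le> n"
    and xy: "fc n k True x = fc n k False y"
    and a: "a \<in> G (n - j)" "fc n j \<beta> x = degs1 dg (n - j) (j - 1) a"
    and b: "b \<in> G (n - j)" "fc n j \<beta> y = degs1 dg (n - j) (j - 1) b"
  shows "\<exists>z\<in>G (n - j). fc n j \<beta> (cmp n k x y) = degs1 dg (n - j) (j - 1) z"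
proof
  have dims: "n - j + (j - 1) = n - 1" "k - j + (j - 1) = k - 1" "k - 1 - (j - 1) = k - j"
    using jk by arith+
  have "fc (n - 1) (k - 1) True (fc n j \<beta> x) = fc (n - 1) (k - 1) False (fc n j \<beta> y)"
    using fc_fc[OF x, of j k \<beta> True] fc_fc[OF y, of j k \<beta> False] jk xy by simp
  then have "degs1 dg (n - j - 1) (j - 1) (fc (n - j) (k - j) True a) =
             degs1 dg (n - j - 1) (j - 1) (fc (n - j) (k - j) False b)"
    using fc_degs1_high[OF a(1), of "j - 1" "k - 1", unfolded dims]
      fc_degs1_high[OF b(1), of "j - 1" "k - 1", unfolded dims] a(2) b(2) jk
    by simp
  moreover have "fc (n - j) (k - j) \<gamma> c \<in> G (n - j - 1)" if "c \<in> G (n - j)" for c \<gamma>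
    using fc_closed[OF that, of "k - j"] jk by simp
  ultimately have ab: "fc (n - j) (k - j) True a = fc (n - j) (k - j) False b"
    using a(1) b(1) degs1_inj by blast
  show "cmp (n - j) (k - j) a b \<in> G (n - j)"
    using cmp_closed[OF a(1) b(1) _ _ ab] jk by simp
  show "fc n j \<beta> (cmp n k x y) = degs1 dg (n - j) (j - 1) (cmp (n - j) (k - j) a b)"
    using fc_cmp_below[OF x y _ _ _ xy, of j \<beta>] cmp_degs1[OF a(1) b(1) _ _ ab, of "j - 1", unfolded dims]
      a(2) b(2) jk by simp
qed

lemma degenerate_fc_cmp_above:
  assumes x: "x \<in> G n" and y: "y \<in> G n" and kj: "1 \<le> k" "k < j" "j \<le> n"
    and xy: "fc n k True x = fc n k False y"
    and a: "a \<in> G (n - j)" "fc n j \<beta> x = degs1 dg (n - j) (j - 1) a"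
    and b: "b \<in> G (n - j)" "fc n j \<beta> y = degs1 dg (n - j) (j - 1) b"
  shows "fc n j \<beta> (cmp n k x y) = degs1 dg (n - j) (j - 1) a"
proof -
  have dim: "n - j + (j - 1) = n - 1"
    using kj by arith
  have "fc (n - 1) k True (fc n j \<beta> x) = fc (n - 1) k False (fc n j \<beta> y)"
    using fc_fc[OF x, of k j True \<beta>] fc_fc[OF y, of k j False \<beta>] kj xy by simp
  then have "degs1 dg (n - j) (j - 1 - 1) a = degs1 dg (n - j) (j - 1 - 1) b"
    using fc_degs1_low[OF a(1), of k "j - 1" True, unfolded dim]
      fc_degs1_low[OF b(1), of k "j - 1" False, unfolded dim] a(2) b(2) kj
    by simp
  then have "a = b"
    using a(1) b(1) degs1_inj by blast
  then show ?thesis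
    using fc_cmp_above[OF x y _ _ _ xy, of j \<beta>] cmp_degs1_self[OF a(1), of k "j - 1", unfolded dim]
      a(2) b(2) kj by simp
qed

lemma folded_cmp:
  assumes gx: "folded n x" and gy: "folded n y" and k: "1 \<le> k" "k \<le> n"
    and xy: "fc n k True x = fc n k False y"
  shows "folded n (cmp n k x y)"
proof (rule foldedI)
  have x: "x \<in> G n" and y: "y \<in> G n"
    using gx gy by (simp_all add: folded_closed)
  show "cmp n k x y \<in> G n"
    using cmp_closed[OF x y k xy] .
  fix j \<beta> assume j: "2 \<le> j" "j \<le> n"
  obtain a where a: "a \<in> G (n - j)" "fc n j \<beta> x = degs1 dg (n - j) (j - 1) a"
    using foldedD[OF gx j] by blast
  obtain b where b: "b \<in> G (n - j)" "fc n j \<beta> y = degs1 dg (n - j) (j - 1) b"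
    using foldedD[OF gy j] by blast
  consider "j = k" | "j < k" | "k < j"
    by linarith
  then show "\<exists>z\<in>G (n - j). fc n j \<beta> (cmp n k x y) = degs1 dg (n - j) (j - 1) z"
  proof cases
    case 1
    then show ?thesis
      using fc_cmp_source[OF x y k xy] fc_cmp_target[OF x y k xy] a b by (cases \<beta>) auto
  next
    case 2
    then show ?thesis
      using degenerate_fc_cmp_below[OF x y _ _ _ xy a b] j k by simp
  next
    case 3
    then show ?thesis
      using degenerate_fc_cmp_above[OF x y _ _ _ xy a b] a(1) j k by auto
  qed
qed

end

section \<open>The folding operations\<close>

lemma Psi_eq_self:
  "(\<And>i. 1 \<le> i \<Longrightarrow> i < r \<Longrightarrow> psi fc cn cmp n i x = x) \<Longrightarrow> Psi fc cn cmp n r x = x"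
  by (induction fc cn cmp n r x rule: Psi.induct) auto

lemma Phi_aux_eq_self:
  "(\<And>r. r \<le> m \<Longrightarrow> Psi fc cn cmp n r x = x) \<Longrightarrow> Phi_aux fc cn cmp n m x = x"
  by (induction m) auto

context cubical_conn
begin

lemma
  assumes x: "x \<in> G (Suc m)" and i: "1 \<le> i" "i \<le> m"
  shows psi_closed: "psi fc cn cmp (Suc m) i x \<in> G (Suc m)"
    and fc_psi_succ: "fc (Suc m) (i + 1) \<alpha> (psi fc cn cmp (Suc m) i x) =
                       dg (m - 1) i (fc m i \<alpha> (fc (Suc m) (i + 1) \<alpha> x))"
    and fc_psi_above: "i + 1 < j \<Longrightarrow> j \<le> Suc m \<Longrightarrow>
                       fc (Suc m) j \<alpha> (psi fc cn cmp (Suc m) i x) = psi fc cn cmp m i (fc (Suc m) j \<alpha> x)"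
proof -
  define wm where "wm = fc (Suc m) (i + 1) False x"
  define wp where "wp = fc (Suc m) (i + 1) True x"
  define A where "A = cn m i True wm"
  define B where "B = cmp (Suc m) (i + 1) A x"
  define C where "C = cn m i False wp"
  have P: "psi fc cn cmp (Suc m) i x = cmp (Suc m) (i + 1) B C"
    unfolding psi_def A_def B_def C_def wm_def wp_def by simp
  have wm: "wm \<in> G m" and wp: "wp \<in> G m"
    using fc_closed[OF x, of "i + 1"] i unfolding wm_def wp_def by simp_all
  have A: "A \<in> G (Suc m)" and C: "C \<in> G (Suc m)"
    using cn_closed[OF wm, of i] cn_closed[OF wp, of i] i unfolding A_def C_def by simp_all
  have A1: "fc (Suc m) (i + 1) True A = fc (Suc m) (i + 1) False x"
    and A0: "fc (Suc m) (i + 1) False A = dg (m - 1) i (fc m i False wm)"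
    using fc_cn[OF wm, of i "i + 1"] i unfolding A_def wm_def by simp_all
  have C0: "fc (Suc m) (i + 1) False C = wp"
    and C1: "fc (Suc m) (i + 1) True C = dg (m - 1) i (fc m i True wp)"
    using fc_cn[OF wp, of i "i + 1"] i unfolding C_def by simp_all
  have B: "B \<in> G (Suc m)"
    using cmp_closed[OF A x _ _ A1] i unfolding B_def by simp
  have B1: "fc (Suc m) (i + 1) True B = wp"
    and B0: "fc (Suc m) (i + 1) False B = dg (m - 1) i (fc m i False wm)"
    using fc_cmp_target[OF A x _ _ A1] fc_cmp_source[OF A x _ _ A1] A0 i
    unfolding B_def wp_def by simp_all
  have BC: "fc (Suc m) (i + 1) True B = fc (Suc m) (i + 1) False C"
    using B1 C0 by simp
  show "psi fc cn cmp (Suc m) i x \<in> G (Suc m)"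
    using cmp_closed[OF B C _ _ BC] i P by simp
  show "fc (Suc m) (i + 1) \<alpha> (psi fc cn cmp (Suc m) i x) = dg (m - 1) i (fc m i \<alpha> (fc (Suc m) (i + 1) \<alpha> x))"
    using fc_cmp_source[OF B C _ _ BC] fc_cmp_target[OF B C _ _ BC] B0 C1 i P
    unfolding wm_def wp_def by (cases \<alpha>) simp_all
  assume j: "i + 1 < j" "j \<le> Suc m"
  have "fc (Suc m) j \<alpha> (psi fc cn cmp (Suc m) i x) = cmp m (i + 1) (fc (Suc m) j \<alpha> B) (fc (Suc m) j \<alpha> C)"
    using fc_cmp_above[OF B C _ _ _ BC] i j P by simp
  also have "fc (Suc m) j \<alpha> B = cmp m (i + 1) (fc (Suc m) j \<alpha> A) (fc (Suc m) j \<alpha> x)"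
    using fc_cmp_above[OF A x _ _ _ A1] i j unfolding B_def by simp
  also have "fc (Suc m) j \<alpha> A = cn (m - 1) i True (fc m (j - 1) \<alpha> wm)"
    using fc_cn[OF wm, of i j \<alpha> True] i j unfolding A_def by simp
  also have "fc m (j - 1) \<alpha> wm = fc m (i + 1) False (fc (Suc m) j \<alpha> x)"
    using fc_fc[OF x, of "i + 1" j False \<alpha>] i j unfolding wm_def by simp
  also have "fc (Suc m) j \<alpha> C = cn (m - 1) i False (fc m (j - 1) \<alpha> wp)"
    using fc_cn[OF wp, of i j \<alpha> False] i j unfolding C_def by simp
  also have "fc m (j - 1) \<alpha> wp = fc m (i + 1) True (fc (Suc m) j \<alpha> x)"
    using fc_fc[OF x, of "i + 1" j True \<alpha>] i j unfolding wp_def by simp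
  finally show "fc (Suc m) j \<alpha> (psi fc cn cmp (Suc m) i x) = psi fc cn cmp m i (fc (Suc m) j \<alpha> x)"
    unfolding psi_def by simp
qed

text \<open>Connections on \<open>\<epsilon>\<^sub>i\<close>-degenerate cubes are degenerate, so \<open>\<psi>\<^sub>i\<close> composes \<open>x\<close> with identities.\<close>

lemma psi_fixed:
  assumes x: "x \<in> G (Suc m)" and i: "1 \<le> i" "i \<le> m"
    and z: "z \<in> G (m - 1)" "fc (Suc m) (i + 1) False x = dg (m - 1) i z"
    and z': "z' \<in> G (m - 1)" "fc (Suc m) (i + 1) True x = dg (m - 1) i z'"
  shows "psi fc cn cmp (Suc m) i x = x"
proof -
  have dim: "Suc (m - 1) = m"
    using i by arith
  have "cn m i True (fc (Suc m) (i + 1) False x) = dg m (i + 1) (fc (Suc m) (i + 1) False x)"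
    using cn_dg_same[OF z(1), of i True] z(2) i dim by simp
  moreover have "cn m i False (fc (Suc m) (i + 1) True x) = dg m (i + 1) (fc (Suc m) (i + 1) True x)"
    using cn_dg_same[OF z'(1), of i False] z'(2) i dim by simp
  ultimately show ?thesis
    using cmp_dg_left_unit[OF x, of "i + 1"] cmp_dg_right_unit[OF x, of "i + 1"] i
    unfolding psi_def by simp
qed

lemma psi_fixed_degs1:
  assumes z: "z \<in> G p" and i: "1 \<le> i" "i < k"
  shows "psi fc cn cmp (p + k) i (degs1 dg p k z) = degs1 dg p k z"
proof -
  obtain k' where k: "k = Suc (Suc k')"
    using i by (cases k; cases "k - 1") auto
  have face: "fc (p + k) (i + 1) \<alpha> (degs1 dg p k z) = dg (p + k') i (degs1 dg p k' z)" for \<alpha>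
    using fc_degs1_low[OF z, of "i + 1" k \<alpha>] degs1_Suc_eq_dg[OF z, of i k'] i k by simp
  have "degs1 dg p k' z \<in> G (p + Suc k' - 1)"
    using degs1_closed[OF z] by simp
  with face show ?thesis
    using psi_fixed[of "degs1 dg p k z" "p + Suc k'" i] degs1_closed[OF z, of k] i k by simp
qed

lemma psi_fixed_folded:
  assumes g: "folded n x" and i: "1 \<le> i" "i < n"
  shows "psi fc cn cmp n i x = x"
proof -
  obtain m where n: "n = Suc m"
    using i by (cases n) auto
  have face: "\<exists>z\<in>G (m - 1). fc n (i + 1) \<alpha> x = dg (m - 1) i z" for \<alpha>
  proof -
    obtain i' where i': "i = Suc i'"
      using i by (cases i) auto
    obtain z where z: "z \<in> G (n - (i + 1))" "fc n (i + 1) \<alpha> x = degs1 dg (n - (i + 1)) i z"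
      using foldedD[OF g, of "i + 1" \<alpha>] i by auto
    have dim: "n - (i + 1) + i' = m - 1"
      using i i' n by arith
    show ?thesis
      using z degs1_Suc_eq_dg[OF z(1), of i i'] degs1_closed[OF z(1), of i'] i i'
      unfolding dim by auto
  qed
  then obtain z z' where "z \<in> G (m - 1)" "fc n (i + 1) False x = dg (m - 1) i z"
    and "z' \<in> G (m - 1)" "fc n (i + 1) True x = dg (m - 1) i z'"
    by meson
  then show ?thesis
    using psi_fixed[of x m i z z'] folded_closed[OF g] i n by simp
qed

lemma Psi_closed: "x \<in> G n \<Longrightarrow> r \<le> n \<Longrightarrow> Psi fc cn cmp n r x \<in> G n"
proof (induction r rule: induct_nat_012)
  case (ge2 r)
  then obtain m where "n = Suc m" "Suc r \<le> m"
    by (cases n) auto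
  with ge2 show ?case
    using psi_closed[of "Psi fc cn cmp n (Suc r) x" m "Suc r"] by simp
qed simp_all

lemma fc_Psi:
  "x \<in> G n \<Longrightarrow> r < j \<Longrightarrow> j \<le> n \<Longrightarrow> fc n j \<alpha> (Psi fc cn cmp n r x) = Psi fc cn cmp (n - 1) r (fc n j \<alpha> x)"
proof (induction r rule: induct_nat_012)
  case (ge2 r)
  then obtain m where n: "n = Suc m"
    by (cases n) auto
  have "fc n j \<alpha> (Psi fc cn cmp n (Suc (Suc r)) x) =
        psi fc cn cmp m (Suc r) (fc n j \<alpha> (Psi fc cn cmp n (Suc r) x))"
    using fc_psi_above[of "Psi fc cn cmp n (Suc r) x" m "Suc r" j \<alpha>] Psi_closed[of x n "Suc r"] ge2.prems n
    by simp
  with ge2 n show ?case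
    by simp
qed simp_all

lemma fc_Psi_degenerate:
  "x \<in> G n \<Longrightarrow> 1 \<le> r \<Longrightarrow> r \<le> n \<Longrightarrow>
   \<exists>z\<in>G (n - r). fc n r \<alpha> (Psi fc cn cmp n r x) = degs1 dg (n - r) (r - 1) z"
proof (induction r)
  case 0
  then show ?case by simp
next
  case (Suc r)
  show ?case
  proof (cases r)
    case 0
    then show ?thesis
      using fc_closed[OF Suc.prems(1), of 1 \<alpha>] Suc.prems by auto
  next
    case (Suc r')
    obtain m where n: "n = Suc m"
      using Suc.prems by (cases n) auto
    define v where "v = Psi fc cn cmp n r x"
    have v: "v \<in> G n"
      using Psi_closed Suc.prems v_def by simp
    obtain z where z: "z \<in> G (n - r)" "fc n r \<alpha> v = degs1 dg (n - r) (r - 1) z"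
      using Suc.IH Suc.prems \<open>r = Suc r'\<close> v_def by auto
    have w: "fc (n - r) 1 \<alpha> z \<in> G (n - Suc r)"
      using fc_closed[OF z(1), of 1 \<alpha>] Suc.prems by simp
    have dims: "n - r + (r - 1) = n - 1" "n - Suc r + (r - 1) = m - 1"
      using Suc.prems n \<open>r = Suc r'\<close> by arith+
    have "fc n (Suc r) \<alpha> (Psi fc cn cmp n (Suc r) x) = dg (m - 1) r (fc m r \<alpha> (fc n (r + 1) \<alpha> v))"
      using fc_psi_succ[of v m r \<alpha>] v n Suc.prems \<open>r = Suc r'\<close> v_def by simp
    also have "fc m r \<alpha> (fc n (r + 1) \<alpha> v) = fc (n - 1) r \<alpha> (fc n r \<alpha> v)"
      using fc_fc[OF v, of r "r + 1" \<alpha> \<alpha>] Suc.prems n \<open>r = Suc r'\<close> by simp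
    also have "\<dots> = degs1 dg (n - Suc r) (r - 1) (fc (n - r) 1 \<alpha> z)"
      using fc_degs1_high[OF z(1), of "r - 1" r \<alpha>, unfolded dims] z(2) Suc.prems \<open>r = Suc r'\<close>
      by (simp add: diff_diff_add)
    also have "dg (m - 1) r \<dots> = degs1 dg (n - Suc r) r (fc (n - r) 1 \<alpha> z)"
      using degs1_Suc_eq_dg[OF w, of r "r - 1", unfolded dims] \<open>r = Suc r'\<close> by simp
    finally show ?thesis
      using w by auto
  qed
qed

lemma Phi_aux_closed: "x \<in> G n \<Longrightarrow> m \<le> n \<Longrightarrow> Phi_aux fc cn cmp n m x \<in> G n"
  by (induction m arbitrary: x) (simp_all add: Psi_closed)

lemma fc_Phi_aux:
  "x \<in> G n \<Longrightarrow> m < j \<Longrightarrow> j \<le> n \<Longrightarrow>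
   fc n j \<alpha> (Phi_aux fc cn cmp n m x) = Phi_aux fc cn cmp (n - 1) m (fc n j \<alpha> x)"
  by (induction m arbitrary: x) (simp_all add: Psi_closed fc_Psi)

lemma Phi_aux_fixed_degs1:
  "z \<in> G p \<Longrightarrow> m \<le> k \<Longrightarrow> Phi_aux fc cn cmp (p + k) m (degs1 dg p k z) = degs1 dg p k z"
  by (intro Phi_aux_eq_self Psi_eq_self psi_fixed_degs1) auto

lemma Phi_aux_fixed_folded: "folded n x \<Longrightarrow> m \<le> n \<Longrightarrow> Phi_aux fc cn cmp n m x = x"
  by (intro Phi_aux_eq_self Psi_eq_self psi_fixed_folded) auto

lemma fc_Phi_aux_degenerate:
  "x \<in> G n \<Longrightarrow> m \<le> n \<Longrightarrow> 2 \<le> j \<Longrightarrow> j \<le> m \<Longrightarrow>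
   \<exists>z\<in>G (n - j). fc n j \<alpha> (Phi_aux fc cn cmp n m x) = degs1 dg (n - j) (j - 1) z"
proof (induction m arbitrary: x)
  case 0
  then show ?case by simp
next
  case (Suc m)
  define v where "v = Psi fc cn cmp n (Suc m) x"
  have v: "v \<in> G n"
    using Psi_closed Suc.prems v_def by simp
  show ?case
  proof (cases "j \<le> m")
    case True
    then show ?thesis
      using Suc.IH[OF v] Suc.prems v_def by simp
  next
    case False
    then have j: "j = Suc m"
      using Suc.prems by simp
    obtain z where z: "z \<in> G (n - Suc m)" "fc n (Suc m) \<alpha> v = degs1 dg (n - Suc m) m z"
      using fc_Psi_degenerate[OF Suc.prems(1), of "Suc m" \<alpha>] Suc.prems v_def by auto
    have dim: "n - Suc m + m = n - 1"
      using Suc.prems by arith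
    have "fc n j \<alpha> (Phi_aux fc cn cmp n (Suc m) x) = Phi_aux fc cn cmp (n - 1) m (fc n (Suc m) \<alpha> v)"
      using fc_Phi_aux[OF v, of m "Suc m" \<alpha>] j Suc.prems v_def by simp
    also have "\<dots> = degs1 dg (n - Suc m) m z"
      using Phi_aux_fixed_degs1[OF z(1), of m m, unfolded dim] z(2) by simp
    finally show ?thesis
      using z j by auto
  qed
qed

lemma folded_Phi: "x \<in> G n \<Longrightarrow> folded n (Phi fc cn cmp n x)"
  unfolding Phi_def by (intro foldedI Phi_aux_closed fc_Phi_aux_degenerate) auto

lemma image_Phi: "Phi fc cn cmp n ` G n = {x. folded n x}"
proof
  show "Phi fc cn cmp n ` G n \<subseteq> {x. folded n x}"
    using folded_Phi by auto
  show "{x. folded n x} \<subseteq> Phi fc cn cmp n ` G n"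
  proof
    fix x assume "x \<in> {x. folded n x}"
    then have "folded n x" by simp
    then show "x \<in> Phi fc cn cmp n ` G n"
      using Phi_aux_fixed_folded[of n x n] folded_closed unfolding Phi_def by force
  qed
qed

end

section \<open>The \<omega>-category of folded cubes\<close>

lemma dimension_exists:
  fixes d :: "nat \<Rightarrow> bool \<Rightarrow> 'a \<Rightarrow> 'a"
  assumes dd: "\<And>p q \<alpha> \<beta>. d q \<beta> (d p \<alpha> x) = (if q < p then d q \<beta> x else d p \<alpha> x)"
    and top: "\<And>\<alpha>. d N \<alpha> x = x"
  shows "\<exists>m. \<forall>p \<alpha>. d p \<alpha> x = x \<longleftrightarrow> m \<le> p"
proof -
  define m where "m = (LEAST p. \<forall>\<alpha>. d p \<alpha> x = x)"
  have fixed: "d m \<alpha> x = x" for \<alpha>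
    using LeastI[of "\<lambda>p. \<forall>\<alpha>. d p \<alpha> x = x" N] top unfolding m_def by blast
  have "d p \<alpha> x = x \<longleftrightarrow> m \<le> p" for p \<alpha>
  proof
    assume "d p \<alpha> x = x"
    then have "\<forall>\<beta>. d p \<beta> x = x"
      using dd[of p _ p \<alpha>] by simp
    then show "m \<le> p"
      unfolding m_def by (rule Least_le)
  next
    assume "m \<le> p"
    then show "d p \<alpha> x = x"
      using dd[of p \<alpha> m \<alpha>] fixed[of \<alpha>] by simp
  qed
  then show ?thesis
    by blast
qed

context cubical_conn
begin

lemma faces1_cmp:
  assumes x: "x \<in> G n" and y: "y \<in> G n" and k: "1 \<le> k" "k \<le> n"
    and xy: "fc n k True x = fc n k False y"
  shows "m < k \<Longrightarrow>
    fc (n - m) (k - m) True (faces1 fc n m \<beta> x) = fc (n - m) (k - m) False (faces1 fc n m \<beta> y) \<and>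
    faces1 fc n m \<beta> (cmp n k x y) = cmp (n - m) (k - m) (faces1 fc n m \<beta> x) (faces1 fc n m \<beta> y)"
proof (induction m)
  case 0
  then show ?case
    using xy by simp
next
  case (Suc m)
  define X where "X = faces1 fc n m \<beta> x"
  define Y where "Y = faces1 fc n m \<beta> y"
  have X: "X \<in> G (n - m)" and Y: "Y \<in> G (n - m)"
    using faces1_closed x y Suc.prems k unfolding X_def Y_def by simp_all
  have XY: "fc (n - m) (k - m) True X = fc (n - m) (k - m) False Y"
    and IH: "faces1 fc n m \<beta> (cmp n k x y) = cmp (n - m) (k - m) X Y"
    using Suc unfolding X_def Y_def by simp_all
  have "fc (n - m - 1) (k - m - 1) True (fc (n - m) 1 \<beta> X) = fc (n - m - 1) 1 \<beta> (fc (n - m) (k - m) True X)"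
    using fc_fc[OF X, of 1 "k - m" \<beta> True] Suc.prems k by simp
  also have "\<dots> = fc (n - m - 1) (k - m - 1) False (fc (n - m) 1 \<beta> Y)"
    using fc_fc[OF Y, of 1 "k - m" \<beta> False] XY Suc.prems k by simp
  finally have "fc (n - Suc m) (k - Suc m) True (fc (n - m) 1 \<beta> X) =
                fc (n - Suc m) (k - Suc m) False (fc (n - m) 1 \<beta> Y)"
    by simp
  moreover have "faces1 fc n (Suc m) \<beta> (cmp n k x y) =
                 cmp (n - Suc m) (k - Suc m) (fc (n - m) 1 \<beta> X) (fc (n - m) 1 \<beta> Y)"
    using faces1_Suc_right[of fc n m \<beta> "cmp n k x y"] fc_cmp_below[OF X Y _ _ _ XY, of 1 \<beta>] IH Suc.prems k
    by simp
  ultimately show ?case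
    using faces1_Suc_right[of fc n m \<beta> x] faces1_Suc_right[of fc n m \<beta> y] unfolding X_def Y_def by simp
qed

lemma faces1_cmp_source_target:
  assumes x: "x \<in> G n" and y: "y \<in> G n" and k: "1 \<le> k" "k \<le> n"
    and xy: "fc n k True x = fc n k False y"
  shows "faces1 fc n k False (cmp n k x y) = faces1 fc n k False x"
    and "faces1 fc n k True (cmp n k x y) = faces1 fc n k True y"
proof -
  define X where "X \<beta> = faces1 fc n (k - 1) \<beta> x" for \<beta>
  define Y where "Y \<beta> = faces1 fc n (k - 1) \<beta> y" for \<beta>
  have XY: "fc (n - (k - 1)) 1 True (X \<beta>) = fc (n - (k - 1)) 1 False (Y \<beta>)"
    and cmp: "faces1 fc n (k - 1) \<beta> (cmp n k x y) = cmp (n - (k - 1)) 1 (X \<beta>) (Y \<beta>)" for \<beta>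
    using faces1_cmp[OF x y k xy, of "k - 1" \<beta>] k unfolding X_def Y_def by simp_all
  have X: "X \<beta> \<in> G (n - (k - 1))" and Y: "Y \<beta> \<in> G (n - (k - 1))" for \<beta>
    using faces1_closed[OF x, of "k - 1" \<beta>] faces1_closed[OF y, of "k - 1" \<beta>] k
    unfolding X_def Y_def by simp_all
  have Suc_k: "faces1 fc n k \<beta> w = fc (n - (k - 1)) 1 \<beta> (faces1 fc n (k - 1) \<beta> w)" for \<beta> w
    using faces1_Suc_right[of fc n "k - 1" \<beta> w] k by simp
  show "faces1 fc n k False (cmp n k x y) = faces1 fc n k False x"
    using fc_cmp_source[OF X Y _ _ XY] cmp k unfolding Suc_k X_def by simp
  show "faces1 fc n k True (cmp n k x y) = faces1 fc n k True y"
    using fc_cmp_target[OF X Y _ _ XY] cmp k unfolding Suc_k Y_def by simp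
qed

lemma faces1_cmp_above_folded:
  assumes gx: "folded n x" and gy: "folded n y" and k: "1 \<le> k" "k < l" "l \<le> n"
    and xy: "fc n k True x = fc n k False y"
  shows "faces1 fc n l \<beta> x = faces1 fc n l \<beta> y"
    and "faces1 fc n l \<beta> (cmp n k x y) = faces1 fc n l \<beta> x"
proof -
  have x: "x \<in> G n" and y: "y \<in> G n"
    using gx gy folded_closed by blast+
  have split: "faces1 fc n l \<beta> w = faces1 fc (n - k) (l - k) \<beta> (faces1 fc n k \<beta> w)" for w
    using faces1_add[of fc n k "l - k" \<beta> w] k by simp
  have mix: "faces1 fc (n - k) (l - k) \<beta> (faces1 fc n k \<gamma> w) = faces1 fc n l \<beta> w" if "folded n w" for w \<gamma>
    using faces1_faces1_folded[OF that, of "l - k" k \<beta> \<gamma>] k by simp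
  have "faces1 fc n k True x = faces1 fc n k False y"
    using folded_fc_eq_iff_faces1_eq[OF gx gy k(1)] xy k by simp
  then show xy_l: "faces1 fc n l \<beta> x = faces1 fc n l \<beta> y"
    using mix[OF gx, of True] mix[OF gy, of False] by simp
  show "faces1 fc n l \<beta> (cmp n k x y) = faces1 fc n l \<beta> x"
    using split[of "cmp n k x y"] faces1_cmp_source_target[OF x y _ _ xy] mix[OF gx] mix[OF gy] xy_l k
    by (cases \<beta>) simp_all
qed

lemma faces1_degs1_faces1_folded:
  assumes g: "folded n x" and qp: "q < p" "p < n"
  shows "faces1 fc n (n - q) \<beta> (degs1 dg p (n - p) (faces1 fc n (n - p) \<alpha> x)) = faces1 fc n (n - q) \<beta> x"
proof -
  define y where "y = faces1 fc n (n - p) \<alpha> x"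
  have y: "y \<in> G p"
    using faces1_closed[OF folded_closed[OF g], of "n - p" \<alpha>] qp unfolding y_def by simp
  have "faces1 fc n (n - q) \<beta> (degs1 dg p (n - p) y) =
        faces1 fc p (p - q) \<beta> (faces1 fc n (n - p) \<beta> (degs1 dg p (n - p) y))"
    using faces1_add[of fc n "n - p" "p - q" \<beta> "degs1 dg p (n - p) y"] qp by simp
  also have "faces1 fc n (n - p) \<beta> (degs1 dg p (n - p) y) = y"
    using faces1_degs1[OF y, of "n - p" "n - p" \<beta>] qp by simp
  also have "faces1 fc p (p - q) \<beta> y = faces1 fc n (p - q + (n - p)) \<beta> x"
    using faces1_faces1_folded[OF g, of "p - q" "n - p" \<beta> \<alpha>] qp unfolding y_def by simp
  finally show ?thesis
    using qp unfolding y_def by (simp add: add.commute)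
qed

lemma Phi_d_Phi_d:
  assumes g: "folded n x"
  shows "Phi_d fc dg n q \<beta> (Phi_d fc dg n p \<alpha> x) =
         (if q < p then Phi_d fc dg n q \<beta> x else Phi_d fc dg n p \<alpha> x)"
proof (cases "p < n \<and> q < n")
  case False
  then show ?thesis
    unfolding Phi_d_def by auto
next
  case True
  define y where "y = faces1 fc n (n - p) \<alpha> x"
  have y: "y \<in> G p"
    using faces1_closed[OF folded_closed[OF g], of "n - p" \<alpha>] True unfolding y_def by simp
  show ?thesis
  proof (cases "q < p")
    case True
    then show ?thesis
      using faces1_degs1_faces1_folded[OF g True] \<open>p < n \<and> q < n\<close> unfolding Phi_d_def by simp
  next
    case False
    have "faces1 fc n (n - q) \<beta> (degs1 dg p (n - p) y) = degs1 dg p (q - p) y"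
      using faces1_degs1[OF y, of "n - q" "n - p" \<beta>] \<open>p < n \<and> q < n\<close> False by (simp add: diff_diff_eq)
    moreover have "degs1 dg q (n - q) (degs1 dg p (q - p) y) = degs1 dg p (n - p) y"
      using degs1_add[of dg p "q - p" "n - q" y] \<open>p < n \<and> q < n\<close> False by simp
    ultimately show ?thesis
      using \<open>p < n \<and> q < n\<close> False unfolding Phi_d_def y_def by simp
  qed
qed

lemma fc_eq_if_Phi_d_eq:
  assumes gx: "folded n x" and gy: "folded n y" and p: "p < n"
    and xy: "Phi_d fc dg n p True x = Phi_d fc dg n p False y"
  shows "fc n (n - p) True x = fc n (n - p) False y"
proof -
  have faces: "faces1 fc n (n - p) \<gamma> w \<in> G p" if "folded n w" for \<gamma> w
    using faces1_closed[OF folded_closed[OF that], of "n - p" \<gamma>] p by simp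
  have "faces1 fc n (n - p) True x = faces1 fc n (n - p) False y"
    using degs1_inj[OF faces[OF gx] faces[OF gy]] xy p unfolding Phi_d_def by simp
  then show ?thesis
    using folded_fc_eq_iff_faces1_eq[OF gx gy, of "n - p"] p by simp
qed

lemma Phi_d_eq_dg_fc:
  assumes g: "folded n x" and p: "p < n"
  shows "Phi_d fc dg n p \<gamma> x = dg (n - 1) (n - p) (fc n (n - p) \<gamma> x)"
proof -
  have w: "faces1 fc n (n - p) \<gamma> x \<in> G p"
    using faces1_closed[OF folded_closed[OF g], of "n - p" \<gamma>] p by simp
  have dims: "p + (n - p - 1) = n - 1" "Suc (n - p - 1) = n - p"
    using p by arith+
  show ?thesis
    using folded_fc_eq[OF g, of "n - p" \<gamma>] degs1_Suc_eq_dg[OF w, of "n - p" "n - p - 1", unfolded dims] p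
    unfolding Phi_d_def by simp
qed

lemma folded_Phi_d:
  assumes g: "folded n x"
  shows "folded n (Phi_d fc dg n p \<alpha> x)"
proof (cases "p < n")
  case True
  then have "folded p (faces1 fc n (n - p) \<alpha> x)"
    using folded_faces1[OF g, of "n - p" \<alpha>] by simp
  then show ?thesis
    using folded_degs1[of p _ "n - p"] True by (simp add: Phi_d_def)
next
  case False
  then show ?thesis
    using g by (simp add: Phi_d_def)
qed

lemma folded_Phi_c:
  "folded n x \<Longrightarrow> folded n y \<Longrightarrow> Phi_d fc dg n p True x = Phi_d fc dg n p False y \<Longrightarrow>
   folded n (Phi_c cmp n p x y)"
  by (cases "p < n") (simp_all add: Phi_c_def folded_cmp fc_eq_if_Phi_d_eq)

lemma eq_if_Phi_d_eq_high: "\<not> p < n \<Longrightarrow> Phi_d fc dg n p True x = Phi_d fc dg n p False y \<Longrightarrow> x = y"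
  by (simp add: Phi_d_def)

lemma Phi_d_Phi_c_source:
  assumes gx: "folded n x" and gy: "folded n y" and xy: "Phi_d fc dg n p True x = Phi_d fc dg n p False y"
  shows "Phi_d fc dg n p False (Phi_c cmp n p x y) = Phi_d fc dg n p False x"
  using faces1_cmp_source_target(1)[OF folded_closed[OF gx] folded_closed[OF gy] _ _ fc_eq_if_Phi_d_eq[OF gx gy _ xy]]
  by (cases "p < n") (simp_all add: Phi_d_def Phi_c_def)

lemma Phi_d_Phi_c_target:
  assumes gx: "folded n x" and gy: "folded n y" and xy: "Phi_d fc dg n p True x = Phi_d fc dg n p False y"
  shows "Phi_d fc dg n p True (Phi_c cmp n p x y) = Phi_d fc dg n p True y"
  using faces1_cmp_source_target(2)[OF folded_closed[OF gx] folded_closed[OF gy] _ _ fc_eq_if_Phi_d_eq[OF gx gy _ xy]]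
    eq_if_Phi_d_eq_high[OF _ xy]
  by (cases "p < n") (simp_all add: Phi_d_def Phi_c_def)

lemma Phi_d_Phi_c_other:
  assumes gx: "folded n x" and gy: "folded n y" and xy: "Phi_d fc dg n p True x = Phi_d fc dg n p False y"
    and qp: "q \<noteq> p"
  shows "Phi_d fc dg n q \<beta> (Phi_c cmp n p x y) = Phi_c cmp n p (Phi_d fc dg n q \<beta> x) (Phi_d fc dg n q \<beta> y)"
proof (cases "p < n \<and> q < n")
  case False
  then show ?thesis
    using eq_if_Phi_d_eq_high[OF _ xy] unfolding Phi_d_def Phi_c_def by auto
next
  case True
  have x: "x \<in> G n" and y: "y \<in> G n"
    using gx gy folded_closed by blast+
  have k: "1 \<le> n - p" "n - p \<le> n" and l: "1 \<le> n - q" "n - q \<le> n"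
    using True by auto
  have xy': "fc n (n - p) True x = fc n (n - p) False y"
    using fc_eq_if_Phi_d_eq[OF gx gy _ xy] True by simp
  have faces: "faces1 fc n (n - q) \<beta> w \<in> G q" if "w \<in> G n" for w
    using faces1_closed[OF that, of "n - q" \<beta>] True by simp
  show ?thesis
  proof (cases "p < q")
    case True
    then have "n - q < n - p"
      using \<open>p < n \<and> q < n\<close> by arith
    note below = faces1_cmp[OF x y k xy' this, of \<beta>]
    have dims: "q + (n - q) = n" "q - p + (n - q) = n - p" "n - (n - q) = q" "n - p - (n - q) = q - p"
      using True \<open>p < n \<and> q < n\<close> by arith+
    show ?thesis
      using below cmp_degs1[OF faces[OF x] faces[OF y], of "q - p" "n - q", unfolded dims] True \<open>p < n \<and> q < n\<close>
      unfolding Phi_d_def Phi_c_def by (simp add: dims)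
  next
    case False
    then have kl: "n - p < n - q"
      using qp \<open>p < n \<and> q < n\<close> by arith
    note above = faces1_cmp_above_folded[OF gx gy k(1) kl l(2) xy', of \<beta>]
    have "cmp n (n - p) (degs1 dg q (n - q) w) (degs1 dg q (n - q) w) = degs1 dg q (n - q) w" if "w \<in> G q" for w
      using cmp_degs1_self[OF that, of "n - p" "n - q"] kl k \<open>p < n \<and> q < n\<close> by simp
    then show ?thesis
      using above faces[OF x] \<open>p < n \<and> q < n\<close> unfolding Phi_d_def Phi_c_def by simp
  qed
qed

lemma Phi_c_left_unit:
  assumes g: "folded n x"
  shows "Phi_c cmp n p (Phi_d fc dg n p False x) x = x"
proof (cases "p < n")
  case True
  then show ?thesis
    using cmp_dg_left_unit[OF folded_closed[OF g], of "n - p"] Phi_d_eq_dg_fc[OF g True]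
    unfolding Phi_c_def by simp
qed (simp add: Phi_c_def Phi_d_def)

lemma Phi_c_right_unit:
  assumes g: "folded n x"
  shows "Phi_c cmp n p x (Phi_d fc dg n p True x) = x"
proof (cases "p < n")
  case True
  then show ?thesis
    using cmp_dg_right_unit[OF folded_closed[OF g], of "n - p"] Phi_d_eq_dg_fc[OF g True]
    unfolding Phi_c_def by simp
qed (simp add: Phi_c_def)

lemma Phi_c_assoc:
  assumes gx: "folded n x" and gy: "folded n y" and gz: "folded n z"
    and xy: "Phi_d fc dg n p True x = Phi_d fc dg n p False y"
    and yz: "Phi_d fc dg n p True y = Phi_d fc dg n p False z"
  shows "Phi_c cmp n p (Phi_c cmp n p x y) z = Phi_c cmp n p x (Phi_c cmp n p y z)"
  using cmp_assoc[OF folded_closed[OF gx] folded_closed[OF gy] folded_closed[OF gz] _ _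
      fc_eq_if_Phi_d_eq[OF gx gy _ xy] fc_eq_if_Phi_d_eq[OF gy gz _ yz]]
  by (cases "p < n") (simp_all add: Phi_c_def)

lemma Phi_c_interchange:
  assumes gx: "folded n x" and gy: "folded n y" and gx': "folded n x'" and gy': "folded n y'"
    and pq: "p \<noteq> q"
    and xy: "Phi_d fc dg n p True x = Phi_d fc dg n p False y"
    and xy': "Phi_d fc dg n p True x' = Phi_d fc dg n p False y'"
    and xy_xy': "Phi_d fc dg n q True (Phi_c cmp n p x y) = Phi_d fc dg n q False (Phi_c cmp n p x' y')"
    and xx': "Phi_d fc dg n q True x = Phi_d fc dg n q False x'"
    and yy': "Phi_d fc dg n q True y = Phi_d fc dg n q False y'"
    and xx'_yy': "Phi_d fc dg n p True (Phi_c cmp n q x x') = Phi_d fc dg n p False (Phi_c cmp n q y y')"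
  shows "Phi_c cmp n q (Phi_c cmp n p x y) (Phi_c cmp n p x' y') =
         Phi_c cmp n p (Phi_c cmp n q x x') (Phi_c cmp n q y y')"
proof (cases "p < n \<and> q < n")
  case False
  then show ?thesis
    using eq_if_Phi_d_eq_high[OF _ xy] eq_if_Phi_d_eq_high[OF _ xy'] eq_if_Phi_d_eq_high[OF _ xx']
      eq_if_Phi_d_eq_high[OF _ yy'] unfolding Phi_c_def by auto
next
  case True
  note fc_eq = fc_eq_if_Phi_d_eq[OF _ _ _ xy] fc_eq_if_Phi_d_eq[OF _ _ _ xy'] fc_eq_if_Phi_d_eq[OF _ _ _ xy_xy']
    fc_eq_if_Phi_d_eq[OF _ _ _ xx'] fc_eq_if_Phi_d_eq[OF _ _ _ yy'] fc_eq_if_Phi_d_eq[OF _ _ _ xx'_yy']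
  have "folded n (Phi_c cmp n p x y)" "folded n (Phi_c cmp n p x' y')"
    "folded n (Phi_c cmp n q x x')" "folded n (Phi_c cmp n q y y')"
    using folded_Phi_c gx gy gx' gy' xy xy' xx' yy' by blast+
  moreover have "1 \<le> n - p" "1 \<le> n - q" "n - p \<noteq> n - q"
    using pq True by arith+
  ultimately show ?thesis
    using cmp_interchange[OF folded_closed[OF gx] folded_closed[OF gy] folded_closed[OF gx'] folded_closed[OF gy'],
        of "n - p" "n - q"] fc_eq gx gy gx' gy' pq True
    unfolding Phi_c_def by simp
qed

lemma folded_dimension: "folded n x \<Longrightarrow> \<exists>m. \<forall>p \<alpha>. Phi_d fc dg n p \<alpha> x = x \<longleftrightarrow> m \<le> p"
  by (rule dimension_exists[where N = n, OF Phi_d_Phi_d]) (simp_all add: Phi_d_def)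

lemma folded_omega_cat: "omega_cat {x. folded n x} (Phi_d fc dg n) (Phi_c cmp n)"
  unfolding omega_cat_def
  by (simp add: folded_Phi_d folded_Phi_c Phi_d_Phi_d Phi_d_Phi_c_source Phi_d_Phi_c_target
      Phi_d_Phi_c_other Phi_c_left_unit Phi_c_right_unit Phi_c_assoc Phi_c_interchange folded_dimension)

lemma dg1_Phi_d:
  assumes x: "x \<in> G n"
  shows "dg n 1 (Phi_d fc dg n p \<alpha> x) = Phi_d fc dg (Suc n) p \<alpha> (dg n 1 x)"
proof -
  have "faces1 fc (Suc n) (Suc (n - p)) \<alpha> (dg n 1 x) = faces1 fc n (n - p) \<alpha> x"
    using fc_dg_same[OF x, of 1 \<alpha>] by simp
  then show ?thesis
    using fc_dg_same[OF x, of 1 \<alpha>] by (cases "p < n"; cases "p = n") (auto simp: Phi_d_def Suc_diff_le)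
qed

lemma dg1_Phi_c:
  assumes gx: "folded n x" and gy: "folded n y" and xy: "Phi_d fc dg n p True x = Phi_d fc dg n p False y"
  shows "dg n 1 (Phi_c cmp n p x y) = Phi_c cmp (Suc n) p (dg n 1 x) (dg n 1 y)"
proof -
  consider "p < n" | "p = n" | "n < p"
    by linarith
  then show ?thesis
  proof cases
    case 1
    then have "Suc n - p = n - p + 1"
      by arith
    with 1 show ?thesis
      using dg_cmp_le[OF folded_closed[OF gx] folded_closed[OF gy], of 1 "n - p"]
        fc_eq_if_Phi_d_eq[OF gx gy 1 xy]
      unfolding Phi_c_def by simp
  next
    case 2
    then have "x = y"
      using eq_if_Phi_d_eq_high[OF _ xy] by simp
    with 2 show ?thesis
      using cmp_degs1_self[OF folded_closed[OF gx], of 1 1] unfolding Phi_c_def by simp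
  next
    case 3
    then show ?thesis
      using eq_if_Phi_d_eq_high[OF _ xy] unfolding Phi_c_def by simp
  qed
qed

lemma folded_omega_hom:
  "omega_hom {x. folded n x} (Phi_d fc dg n) (Phi_c cmp n)
     {x. folded (Suc n) x} (Phi_d fc dg (Suc n)) (Phi_c cmp (Suc n)) (dg n 1)"
  unfolding omega_hom_def
  using folded_dg1 dg1_Phi_d[OF folded_closed] dg1_Phi_c by blast

end

theorem theorem3p8:
  fixes G :: "nat \<Rightarrow> 'a set"
    and fc :: "nat \<Rightarrow> nat \<Rightarrow> bool \<Rightarrow> 'a \<Rightarrow> 'a"
    and dg :: "nat \<Rightarrow> nat \<Rightarrow> 'a \<Rightarrow> 'a"
    and cn :: "nat \<Rightarrow> nat \<Rightarrow> bool \<Rightarrow> 'a \<Rightarrow> 'a"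
    and cmp :: "nat \<Rightarrow> nat \<Rightarrow> 'a \<Rightarrow> 'a \<Rightarrow> 'a"
  assumes "cubical_omega_cat_conn G fc dg cn cmp"
  shows "\<forall>n. omega_cat (Phi fc cn cmp n ` G n) (Phi_d fc dg n) (Phi_c cmp n)
           \<and> dg n 1 ` (Phi fc cn cmp n ` G n) \<subseteq> Phi fc cn cmp (Suc n) ` G (Suc n)
           \<and> omega_hom (Phi fc cn cmp n ` G n) (Phi_d fc dg n) (Phi_c cmp n)
                       (Phi fc cn cmp (Suc n) ` G (Suc n)) (Phi_d fc dg (Suc n)) (Phi_c cmp (Suc n))
                       (dg n 1)"
proof
  fix n
  interpret cubical_conn G fc dg cn cmp
    using assms by unfold_locales
  show "omega_cat (Phi fc cn cmp n ` G n) (Phi_d fc dg n) (Phi_c cmp n)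
           \<and> dg n 1 ` (Phi fc cn cmp n ` G n) \<subseteq> Phi fc cn cmp (Suc n) ` G (Suc n)
           \<and> omega_hom (Phi fc cn cmp n ` G n) (Phi_d fc dg n) (Phi_c cmp n)
                       (Phi fc cn cmp (Suc n) ` G (Suc n)) (Phi_d fc dg (Suc n)) (Phi_c cmp (Suc n))
                       (dg n 1)"
    unfolding image_Phi using folded_omega_cat folded_omega_hom folded_dg1 by auto
qed

end
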